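(* For all $1\le i,j\le m+n$, as operators on $\widetilde T(\mathbb V)$, $$L(e_i)L(e_j)=(-1)^{\hat i\hat j}q_i^{\delta_{ij}}L(e_j)L(e_i)L(T_1^{\gamma(i,j)}),$$ $$L(e_i^\ast)L(e_j^\ast)=(-1)^{\hat i\hat j}q_i^{\delta_{ij}}L(T_1^{\gamma(i,j)})L(e_j^\ast)L(e_i^\ast),$$ $$L(e_i^\ast)L(e_j)=\delta_{ij}K_i^{-1}+(-1)^{\hat i\hat j}L(e_j)L(T_1^{-\gamma(i,j)})L(e_i^\ast).$$
   Context: $q$ is an indeterminate, $m,n\ge1$, $[m+n]=\{1,\dots,m+n\}$. The Hecke algebra $\mathscr H_d$ is the $\mathbb C(q)$-algebra generated by $T_1,\dots,T_{d-1}$ with relations $(T_i-q)(T_i+q^{-1})=0$, $T_iT_{i+1}T_i=T_{i+1}T_iT_{i+1}$, $T_iT_j=T_jT_i$ ($|i-j|>1$); $T_w=T_{i_1}\cdots T_{i_k}$ for a reduced expression $w=s_{i_1}\cdots s_{i_k}\in\mathfrak S_d$; $\mathscr H_\infty$ is the inductive limit of $\mathscr H_0\subset\mathscr H_1\subset\cdots$, and $T\mapsto T^{\uparrow k}$ is the algebra endomorphism with $T_i^{\uparrow k}=T_{i+k}$. Parity: $\hat i=0$ if $i\le m$, $\hat i=1$ if $i>m$; $q_i=q^{(-1)^{\hat i}}$. $\gamma(i,j)=1$ if $i>j$ and $-1$ if $i\le j$. $\mathbb V$ is the $\mathbb C(q)$-vector space with basis $e_1,\dots,e_{m+n}$, $e_i$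 of parity $\hat i$; $e_1^\ast,\dots,e_{m+n}^\ast$ is the dual basis. For $I=(i_d,\dots,i_1)\in[m+n]^d$, $e_I=e_{i_d}\otimes\cdots\otimes e_{i_1}$, written $e_{i_d}\cdots e_{i_1}$; $I.s_k$ is $I$ with the entries $i_k,i_{k+1}$ swapped. The right $\mathscr H_d$-action on $\mathbb V^{\otimes d}$: $e_I.T_k=(-1)^{\hat i_k\hat i_{k+1}}e_{I.s_k}$ if $i_k>i_{k+1}$; $=(-1)^{\hat i_k}q_{i_k}e_I$ if $i_k=i_{k+1}$; $=(-1)^{\hat i_k\hat i_{k+1}}e_{I.s_k}+(q-q^{-1})e_I$ if $i_k<i_{k+1}$. Set $\widetilde T_d(\mathbb V)=\mathbb V^{\otimes d}\otimes_{\mathscr H_d}\mathscr H_\infty$, $\widetilde T(\mathbb V)=\bigoplus_{d\ge0}\widetilde T_d(\mathbb V)$, with product $(e_{j_k}\cdots e_{j_1}\otimes T_\tau)\cdot(e_{i_d}\cdots e_{i_1}\otimes T_\sigma)=e_{j_k}\cdots e_{j_1}e_{i_d}\cdots e_{i_1}\otimes T_\tau^{\uparrow d}T_\sigma$. For $\varphi\in\widetilde T(\mathbb V)$, $L(\varphi)$ is left multiplication by $\varphi$; $L(e_i)$ uses $e_i\otimes1\in\widetilde T_1(\mathbb V)$ and $L(T)$ for $T\in\mathscr H_\infty$ uses $1\otimes T\in\widetilde T_0(\mathbb V)$. For $j\in[m+n]$, $f_j(e_r)=q_j^{-\delta_{jr}}e_r$ and $g_j(e_r)=e_r\otimes T_1^{-\gamma(j,r)}\in\widetilde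 T_1(\mathbb V)$, and $L(e_j^\ast)=0$ on $\widetilde T_0(\mathbb V)$, $$L(e_j^\ast)(e_{i_d}\cdots e_{i_1}\otimes T_\sigma)=\sum_{k=1}^d(-1)^{\hat j(\hat i_d+\cdots+\hat i_{k+1})}\langle e_j^\ast,e_{i_k}\rangle\,g_j(e_{i_d})\cdots g_j(e_{i_{k+1}})f_j(e_{i_{k-1}})\cdots f_j(e_{i_1})\cdot T_\sigma$$ (product in $\widetilde T(\mathbb V)$). The operator $K_j$ ($j\in[m+n]$) on $\widetilde T(\mathbb V)$ acts by $K_j(e_I\otimes T)=q_j^{\#\{r:\,i_r=j\}}\,e_I\otimes T$. *)

theory Defs
  imports "HOL-Library.Poly_Mapping" "HOL-Computational_Algebra.Fraction_Field"
          "HOL-Computational_Algebra.Polynomial"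
begin

section \<open>Scalars: the field C(q) of rational functions in an indeterminate q\<close>

type_synonym K = "complex poly fract"

definition qq :: K where "qq = Fraction_Field.Fract [:0, 1:] 1"

definition smul :: "K \<Rightarrow> ('a \<Rightarrow>\<^sub>0 K) \<Rightarrow> ('a \<Rightarrow>\<^sub>0 K)" where
  "smul c x = Poly_Mapping.map (\<lambda>v. c * v) x"

definition basis :: "'a \<Rightarrow> ('a \<Rightarrow>\<^sub>0 K)" where
  "basis b = Poly_Mapping.single b 1"

definition lext :: "('a \<Rightarrow> ('b \<Rightarrow>\<^sub>0 K)) \<Rightarrow> ('a \<Rightarrow>\<^sub>0 K) \<Rightarrow> ('b \<Rightarrow>\<^sub>0 K)" where
  "lext f x = (\<Sum>b\<in>Poly_Mapping.keys x. smul (Poly_Mapping.lookup x b) (f b))"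

inductive_set kspan :: "('a \<Rightarrow>\<^sub>0 K) set \<Rightarrow> ('a \<Rightarrow>\<^sub>0 K) set" for S where
  zero: "0 \<in> kspan S"
| step: "x \<in> kspan S \<Longrightarrow> s \<in> S \<Longrightarrow> x + smul c s \<in> kspan S"

definition par :: "nat \<Rightarrow> nat \<Rightarrow> nat" where
  "par m i = (if i \<le> m then 0 else 1)"

definition qi :: "nat \<Rightarrow> nat \<Rightarrow> K" where
  "qi m i = (if i \<le> m then qq else inverse qq)"

definition psign :: "nat \<Rightarrow> nat \<Rightarrow> nat \<Rightarrow> K" where
  "psign m i j = (-1) ^ (par m i * par m j)"

definition gam :: "nat \<Rightarrow> nat \<Rightarrow> int" where
  "gam i j = (if i > j then 1 else -1)"

text \<open>A word [k1,...,kr] (letters \<ge> 1) stands for T_k1 ... T_kr in the free algebra on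
  the generators T_1, T_2, ...; a Hecke element representative is a formal K-linear
  combination of words. H_infinity is this free algebra modulo the two-sided ideal
  generated by the Hecke relations (see hecke_rels).\<close>

type_synonym hword = "nat list"
type_synonym helt = "hword \<Rightarrow>\<^sub>0 K"

definition hmul :: "helt \<Rightarrow> helt \<Rightarrow> helt" where
  "hmul a b = (\<Sum>v\<in>Poly_Mapping.keys a. \<Sum>w\<in>Poly_Mapping.keys b. smul (Poly_Mapping.lookup a v * Poly_Mapping.lookup b w) (basis (v @ w)))"

definition hT :: "nat \<Rightarrow> helt" where "hT k = basis [k]"

text \<open>T_k^{-1} = T_k - (q - q^{-1}), from the quadratic relation.\<close>
definition hTinv :: "nat \<Rightarrow> helt" where
  "hTinv k = hT k - smul (qq - inverse qq) (basis [])"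

text \<open>T_k^e for e \<in> {1,-1} (the only exponents used).\<close>
definition hTpow :: "nat \<Rightarrow> int \<Rightarrow> helt" where
  "hTpow k e = (if e = 1 then hT k else if e = -1 then hTinv k else undefined)"

definition hprod :: "helt list \<Rightarrow> helt" where
  "hprod hs = foldr hmul hs (basis [])"

definition hshift :: "nat \<Rightarrow> helt \<Rightarrow> helt" where
  "hshift s h = lext (\<lambda>w. basis (map (\<lambda>i. i + s) w)) h"

definition hecke_rels :: "helt set" where
  "hecke_rels =
     {basis [i, i] - smul (qq - inverse qq) (basis [i]) - basis [] | i. 1 \<le> i}
   \<union> {basis [i, Suc i, i] - basis [Suc i, i, Suc i] | i. 1 \<le> i}
   \<union> {basis [i, j] - basis [j, i] | i j. 1 \<le> i \<and> 1 \<le> j \<and> (i + 1 < j \<or> j + 1 < i)}"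

section \<open>The space T~(V) = (+)_d V^{(x)d} (x)_{H_d} H_infinity, via representatives\<close>

text \<open>A basis representative (I, u) with I = [i_1, ..., i_d] (so I ! (k-1) = i_k) stands
  for e_{i_d} ... e_{i_1} (x) T_u. Representatives are formal K-linear combinations of
  such pairs; T~(V) is the space of valid representatives modulo the subspace Rel.\<close>

type_synonym tvec = "(nat list \<times> hword) \<Rightarrow>\<^sub>0 K"

definition valid_idx :: "nat \<Rightarrow> nat \<Rightarrow> nat list \<Rightarrow> bool" where
  "valid_idx m n I \<longleftrightarrow> set I \<subseteq> {1..m+n}"

definition valid_word :: "hword \<Rightarrow> bool" where
  "valid_word u \<longleftrightarrow> 0 \<notin> set u"

definition validv :: "nat \<Rightarrow> nat \<Rightarrow> tvec \<Rightarrow> bool" where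
  "validv m n x \<longleftrightarrow> (\<forall>(I, u) \<in> Poly_Mapping.keys x. valid_idx m n I \<and> valid_word u)"

definition tens :: "nat list \<Rightarrow> helt \<Rightarrow> tvec" where
  "tens I h = lext (\<lambda>w. basis (I, w)) h"

definition tensv :: "(nat list \<Rightarrow>\<^sub>0 K) \<Rightarrow> hword \<Rightarrow> tvec" where
  "tensv v u = lext (\<lambda>I. basis (I, u)) v"

text \<open>The right action e_I . T_k on V^{(x)d} (1 \<le> k < d).\<close>
definition actT :: "nat \<Rightarrow> nat list \<Rightarrow> nat \<Rightarrow> (nat list \<Rightarrow>\<^sub>0 K)" where
  "actT m I k =
    (let a = I ! (k - 1); b = I ! k; J = I[k - 1 := b, k := a] in
     if a > b then smul (psign m a b) (basis J)
     else if a = b then smul ((-1) ^ par m a * qi m a) (basis I)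
     else smul (psign m a b) (basis J) + smul (qq - inverse qq) (basis I))"

definition relgen :: "nat \<Rightarrow> nat \<Rightarrow> tvec set" where
  "relgen m n =
     {tens I (hmul (basis a) (hmul r (basis b))) | I a b r.
        valid_idx m n I \<and> valid_word a \<and> valid_word b \<and> r \<in> hecke_rels}
   \<union> {tensv (actT m I k) u - basis (I, k # u) | I k u.
        valid_idx m n I \<and> valid_word u \<and> 1 \<le> k \<and> k < length I}"

definition Rel :: "nat \<Rightarrow> nat \<Rightarrow> tvec set" where
  "Rel m n = kspan (relgen m n)"

definition teq :: "nat \<Rightarrow> nat \<Rightarrow> tvec \<Rightarrow> tvec \<Rightarrow> bool" where
  "teq m n x y \<longleftrightarrow> x - y \<in> Rel m n"

definition Le :: "nat \<Rightarrow> tvec \<Rightarrow> tvec" where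
  "Le i = lext (\<lambda>(I, u). basis (I @ [i], u))"

definition Lh :: "helt \<Rightarrow> tvec \<Rightarrow> tvec" where
  "Lh h = lext (\<lambda>(I, u). tens I (hmul (hshift (length I) h) (basis u)))"

definition LT1pow :: "int \<Rightarrow> tvec \<Rightarrow> tvec" where
  "LT1pow e = Lh (hTpow 1 e)"

definition Kinv :: "nat \<Rightarrow> nat \<Rightarrow> tvec \<Rightarrow> tvec" where
  "Kinv m i = lext (\<lambda>(I, u). smul (inverse (qi m i) ^ count_list I i) (basis (I, u)))"

definition Lstar :: "nat \<Rightarrow> nat \<Rightarrow> tvec \<Rightarrow> tvec" where
  "Lstar m j = lext (\<lambda>(I, u).
     \<Sum>k\<in>{1..length I}.
       if I ! (k - 1) = j then
         smul ((-1) ^ (par m j * (\<Sum>p\<in>{k+1..length I}. par m (I ! (p - 1))))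
               * (\<Prod>p\<in>{1..<k}. if I ! (p - 1) = j then inverse (qi m j) else 1))
              (tens (take (k - 1) I @ drop k I)
                    (hmul (hprod (map (\<lambda>p. hTpow (p - 1) (- gam j (I ! (p - 1))))
                                      (rev [k+1..<length I + 1])))
                          (basis u)))
       else 0)"

end

theory Submission
  imports Defs
begin

text \<open>
  All computations happen on representatives, modulo the span \<open>Rel\<close> of the Hecke relations and of
  the relations defining the tensor product over \<open>\<H>\<^sub>d\<close>; this span is stable under \<open>L(e\<^sub>a)\<close> and
  \<open>L(h)\<close>, so these operators descend to the quotient.

  The third relation even holds on the nose: in \<open>L(e\<^sub>i\<^sup>*)(e\<^sub>j e\<^sub>I \<otimes> T)\<close> the summand that contracts the new
  letter \<open>e\<^sub>j\<close> is \<open>K\<^sub>i\<^sup>-\<^sup>1(e\<^sub>I \<otimes> T)\<close>, and each other summand acquires exactly one more factor \<open>g\<^sub>i(e\<^sub>j)\<close>.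
  The first relation is the defining relation for \<open>e\<^sub>I . T\<^sub>k\<close> applied to the top two letters.
  The second is proved on basis vectors by induction on the length of \<open>I\<close>: pulling the last letter
  \<open>e\<^sub>a\<close> out of both sides with the third relation, the terms where \<open>e\<^sub>a\<close> passes both dual vectors
  reduce to the induction hypothesis, because \<open>T\<^sub>1\<^sup>\<plusminus>\<^sup>1\<close> moves through \<open>L(e\<^sup>*)\<close> as \<open>T\<^sub>2\<^sup>\<plusminus>\<^sup>1\<close> (which commutes
  with the far generators produced by \<open>L(e\<^sup>*)\<close>), followed by a braid relation with mixed exponents;
  the terms where \<open>e\<^sub>a\<close> is contracted reduce to the quadratic relation for \<open>T\<^sub>1\<close>.
\<close>

section \<open>Finite linear combinations\<close>

lemma lookup_smul[simp]: "Poly_Mapping.lookup (smul c x) k = c * Poly_Mapping.lookup x k"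
  by (simp add: smul_def Poly_Mapping.map.rep_eq when_def)

lemma lookup_basis: "Poly_Mapping.lookup (basis b) k = (if b = k then 1 else 0)"
  by (simp add: basis_def lookup_single when_def)

lemma keys_basis[simp]: "Poly_Mapping.keys (basis b) = {b}"
  by (simp add: basis_def)

lemma keys_smul: "Poly_Mapping.keys (smul c x) \<subseteq> Poly_Mapping.keys x"
  by (auto simp: in_keys_iff)

lemma keys_diff: "Poly_Mapping.keys (x - y) \<subseteq> Poly_Mapping.keys x \<union> Poly_Mapping.keys y"
  by (auto simp: in_keys_iff lookup_minus)

lemma smul_add: "smul c (x + y) = smul c x + smul c y"
  by (rule poly_mapping_eqI) (simp add: lookup_add algebra_simps)

lemma smul_add_left: "smul (c + d) x = smul c x + smul d x"
  by (rule poly_mapping_eqI) (simp add: lookup_add algebra_simps)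

lemma smul_diff: "smul c (x - y) = smul c x - smul c y"
  by (rule poly_mapping_eqI) (simp add: lookup_minus algebra_simps)

lemma smul_smul[simp]: "smul c (smul d x) = smul (c * d) x"
  by (rule poly_mapping_eqI) (simp)

lemma smul_zero[simp]: "smul c 0 = 0"
  by (rule poly_mapping_eqI) (simp)

lemma smul_0[simp]: "smul 0 x = 0"
  by (rule poly_mapping_eqI) (simp)

lemma smul_1[simp]: "smul 1 x = x"
  by (rule poly_mapping_eqI) (simp)

lemma smul_m1: "smul (-1) x = - x"
  by (rule poly_mapping_eqI) (simp)

lemma smul_sum: "smul c (sum f S) = (\<Sum>s\<in>S. smul c (f s))"
  by (induction S rule: infinite_finite_induct) (auto simp: smul_add)

lemma lext_eq_sum:
  assumes "finite S" "Poly_Mapping.keys x \<subseteq> S"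
  shows "lext f x = (\<Sum>b\<in>S. smul (Poly_Mapping.lookup x b) (f b))"
  unfolding lext_def
  by (rule sum.mono_neutral_left) (use assms in \<open>auto simp: in_keys_iff\<close>)

lemma lext_add: "lext f (x + y) = lext f x + lext f y"
proof -
  let ?S = "Poly_Mapping.keys x \<union> Poly_Mapping.keys y"
  have "Poly_Mapping.keys (x + y) \<subseteq> ?S" by (rule keys_add)
  then show ?thesis
    by (simp add: lext_eq_sum[of ?S] lookup_add smul_add_left sum.distrib)
qed

lemma lext_smul: "lext f (smul c x) = smul c (lext f x)"
  by (simp add: lext_eq_sum[of "Poly_Mapping.keys x"] keys_smul smul_sum)

lemma lext_basis[simp]: "lext f (basis b) = f b"
  by (simp add: lext_def basis_def)

lemma lext_cong: "(\<And>b. b \<in> Poly_Mapping.keys x \<Longrightarrow> f b = g b) \<Longrightarrow> lext f x = lext g x"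
  by (simp add: lext_def)

lemma lext_fun_add: "lext (\<lambda>b. f b + g b) x = lext f x + lext g x"
  by (simp add: lext_def smul_add sum.distrib)

lemma lext_fun_smul: "lext (\<lambda>b. smul c (f b)) x = smul c (lext f x)"
  by (simp add: lext_def smul_sum mult.commute)

lemma sum_delta_mult: "finite K \<Longrightarrow> (\<Sum>xa\<in>K. f xa * (if xa = k then 1 else 0)) = (if k \<in> K then f k else (0::K))"
proof -
  assume "finite K"
  have "(\<Sum>xa\<in>K. f xa * (if xa = k then 1 else 0)) = (\<Sum>xa\<in>K. if xa = k then f xa else 0)"
    by (rule sum.cong) auto
  then show ?thesis using \<open>finite K\<close> by (simp add: sum.delta')
qed

lemma lext_basis_id: "lext basis x = x"
  by (rule poly_mapping_eqI)
     (auto simp: lext_def lookup_sum lookup_basis sum_delta_mult in_keys_iff)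

lemma keys_lext: "Poly_Mapping.keys (lext f x) \<subseteq> (\<Union>b\<in>Poly_Mapping.keys x. Poly_Mapping.keys (f b))"
proof -
  have "Poly_Mapping.keys (lext f x) \<subseteq> (\<Union>b\<in>Poly_Mapping.keys x. Poly_Mapping.keys (smul (Poly_Mapping.lookup x b) (f b)))"
    unfolding lext_def by (rule keys_sum)
  also have "\<dots> \<subseteq> (\<Union>b\<in>Poly_Mapping.keys x. Poly_Mapping.keys (f b))"
    by (intro UN_mono subset_refl keys_smul)
  finally show ?thesis .
qed

definition lin :: "(('a \<Rightarrow>\<^sub>0 K) \<Rightarrow> ('b \<Rightarrow>\<^sub>0 K)) \<Rightarrow> bool" where
  "lin g \<longleftrightarrow> (\<forall>x y. g (x + y) = g x + g y) \<and> (\<forall>c x. g (smul c x) = smul c (g x))"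

lemma lin_lext: "lin (lext f)"
  by (simp add: lin_def lext_add lext_smul)

lemma lin_add: "lin g \<Longrightarrow> g (x + y) = g x + g y" by (simp add: lin_def)

lemma lin_smul: "lin g \<Longrightarrow> g (smul c x) = smul c (g x)" by (simp add: lin_def)

lemma lin_zero: "lin g \<Longrightarrow> g 0 = 0"
  using lin_smul[of g 0 0] by simp

lemma lin_uminus: "lin g \<Longrightarrow> g (- x) = - g x"
  using lin_smul[of g "-1" x] by (simp add: smul_m1)

lemma lin_diff: "lin g \<Longrightarrow> g (x - y) = g x - g y"
  using lin_add[of g x "-y"] lin_uminus[of g y] by simp

lemma lin_sum: "lin g \<Longrightarrow> g (sum f S) = (\<Sum>s\<in>S. g (f s))"
  by (induction S rule: infinite_finite_induct) (auto simp: lin_add lin_zero)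

lemma lin_expand: "lin g \<Longrightarrow> g x = lext (\<lambda>b. g (basis b)) x"
proof -
  assume g: "lin g"
  have "g x = g (lext basis x)" by (simp add: lext_basis_id)
  also have "\<dots> = lext (\<lambda>b. g (basis b)) x"
    unfolding lext_def by (simp add: lin_sum[OF g] lin_smul[OF g])
  finally show ?thesis .
qed

lemma lin_eqI: "lin g \<Longrightarrow> lin h \<Longrightarrow> (\<And>b. b \<in> Poly_Mapping.keys x \<Longrightarrow> g (basis b) = h (basis b)) \<Longrightarrow> g x = h x"
  by (metis lin_expand lext_cong)

lemma lin_comp: "lin g \<Longrightarrow> lin h \<Longrightarrow> lin (\<lambda>x. g (h x))"
  by (simp add: lin_def)

lemma lin_id: "lin (\<lambda>x. x)" by (simp add: lin_def)

lemma lin_plus: "lin g \<Longrightarrow> lin h \<Longrightarrow> lin (\<lambda>x. g x + h x)"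
  by (simp add: lin_def smul_add)

lemma lin_minus: "lin g \<Longrightarrow> lin h \<Longrightarrow> lin (\<lambda>x. g x - h x)"
  by (simp add: lin_def smul_diff)

lemma lin_smul_const: "lin g \<Longrightarrow> lin (\<lambda>x. smul c (g x))"
  by (simp add: lin_def smul_add mult.commute)

lemma lin_zero_map: "lin (\<lambda>x. 0)"
  by (simp add: lin_def)

lemma lin_if: "lin g \<Longrightarrow> lin h \<Longrightarrow> lin (\<lambda>x. if P then g x else h x)"
  by (simp add: lin_def)

lemma lin_sum_fun: "(\<And>s. s \<in> S \<Longrightarrow> lin (g s)) \<Longrightarrow> lin (\<lambda>x. \<Sum>s\<in>S. g s x)"
  by (induction S rule: infinite_finite_induct) (auto simp: lin_def sum.distrib smul_sum smul_add)

lemma kspan_add: assumes "x \<in> kspan S" "y \<in> kspan S" shows "x + y \<in> kspan S"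
  using assms(2)
proof (induction y rule: kspan.induct)
  case zero then show ?case using assms(1) by simp
next
  case (step y s c)
  then show ?case using kspan.step[of "x + y" S s c] by (simp add: add.assoc)
qed

lemma kspan_smul: "x \<in> kspan S \<Longrightarrow> smul c x \<in> kspan S"
proof (induction x rule: kspan.induct)
  case zero then show ?case by (simp add: kspan.zero)
next
  case (step y s d)
  then show ?case using kspan.step[of "smul c y" S s "c * d"] by (simp add: smul_add)
qed

lemma kspan_gen: "s \<in> S \<Longrightarrow> s \<in> kspan S"
  using kspan.step[OF kspan.zero, of s S 1] by simp

lemma kspan_uminus: "x \<in> kspan S \<Longrightarrow> - x \<in> kspan S"
  using kspan_smul[of x S "-1"] by (simp add: smul_m1)

lemma kspan_diff: "x \<in> kspan S \<Longrightarrow> y \<in> kspan S \<Longrightarrow> x - y \<in> kspan S"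
  using kspan_add[OF _ kspan_uminus] by fastforce

lemma kspan_sum: "(\<And>s. s \<in> A \<Longrightarrow> f s \<in> kspan S) \<Longrightarrow> sum f A \<in> kspan S"
  by (induction A rule: infinite_finite_induct) (auto intro: kspan.zero kspan_add)

lemma kspan_lext: "(\<And>b. b \<in> Poly_Mapping.keys x \<Longrightarrow> f b \<in> kspan S) \<Longrightarrow> lext f x \<in> kspan S"
  unfolding lext_def by (auto intro: kspan_sum kspan_smul)

lemma kspan_lin_image:
  assumes "lin g" "x \<in> kspan S" "\<And>s. s \<in> S \<Longrightarrow> g s \<in> kspan T"
  shows "g x \<in> kspan T"
  using assms(2)
proof (induction x rule: kspan.induct)
  case zero then show ?case by (simp add: lin_zero[OF assms(1)] kspan.zero)
next
  case (step y s c)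
  then show ?case by (simp add: lin_add[OF assms(1)] lin_smul[OF assms(1)] kspan_add kspan_smul assms(3))
qed

lemma kspan_lin_diff:
  assumes "lin g" "lin h" "\<And>b. b \<in> Poly_Mapping.keys x \<Longrightarrow> g (basis b) - h (basis b) \<in> kspan S"
  shows "g x - h x \<in> kspan S"
proof -
  have "g x - h x = lext (\<lambda>b. g (basis b) - h (basis b)) x"
    using lin_eqI[OF lin_minus[OF assms(1,2)] lin_lext, of x "\<lambda>b. g (basis b) - h (basis b)"]
    by simp
  then show ?thesis using assms(3) by (simp add: kspan_lext)
qed

section \<open>The Hecke algebra on words\<close>

lemma hmul_lext: "hmul a b = lext (\<lambda>v. lext (\<lambda>w. basis (v @ w)) b) a"
  unfolding hmul_def lext_def by (simp add: smul_sum)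

lemma hmul_lext_right: "hmul a b = lext (\<lambda>w. lext (\<lambda>v. basis (v @ w)) a) b"
  unfolding hmul_def lext_def by (subst sum.swap) (simp add: smul_sum mult.commute)

lemma lin_hmul_right: "lin (hmul a)"
  by (simp add: hmul_lext_right[abs_def] lin_lext)

lemma lin_hmul_left: "lin (\<lambda>a. hmul a b)"
  by (simp add: hmul_lext lin_lext)

lemma hmul_basis[simp]: "hmul (basis v) (basis w) = basis (v @ w)"
  by (simp add: hmul_lext)

lemma hmul_add_right: "hmul a (x + y) = hmul a x + hmul a y" using lin_add[OF lin_hmul_right] .

lemma hmul_add_left: "hmul (x + y) b = hmul x b + hmul y b" using lin_add[OF lin_hmul_left] .

lemma hmul_diff_right: "hmul a (x - y) = hmul a x - hmul a y" using lin_diff[OF lin_hmul_right] .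

lemma hmul_diff_left: "hmul (x - y) b = hmul x b - hmul y b" using lin_diff[OF lin_hmul_left] .

lemma hmul_smul_right: "hmul a (smul c x) = smul c (hmul a x)" using lin_smul[OF lin_hmul_right] .

lemma hmul_smul_left: "hmul (smul c x) b = smul c (hmul x b)" using lin_smul[OF lin_hmul_left] .

lemmas hmul_simps = hmul_add_right hmul_add_left hmul_diff_right hmul_diff_left hmul_smul_right hmul_smul_left

lemma hmul_Nil_left[simp]: "hmul (basis []) a = a"
  by (rule lin_eqI[OF lin_hmul_right lin_id]) simp

lemma hmul_Nil_right[simp]: "hmul a (basis []) = a"
  by (rule lin_eqI[OF lin_hmul_left lin_id]) simp

lemma hmul_assoc: "hmul (hmul a b) c = hmul a (hmul b c)"
proof -
  have on_words: "hmul (hmul a (basis v)) (basis w) = hmul a (hmul (basis v) (basis w))" for v w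
    by (rule lin_eqI[OF lin_comp[OF lin_hmul_left lin_hmul_left] lin_hmul_left]) simp
  have on_word: "hmul (hmul a b) (basis w) = hmul a (hmul b (basis w))" for w
    by (rule lin_eqI[OF lin_comp[OF lin_hmul_left lin_hmul_right] lin_comp[OF lin_hmul_right lin_hmul_left]])
       (rule on_words)
  show ?thesis
    by (rule lin_eqI[OF lin_hmul_right lin_comp[OF lin_hmul_right lin_hmul_right]]) (rule on_word)
qed

lemma hprod_Nil[simp]: "hprod [] = basis []" by (simp add: hprod_def)

lemma hprod_Cons[simp]: "hprod (x # xs) = hmul x (hprod xs)" by (simp add: hprod_def)

lemma lin_hshift: "lin (hshift s)" by (simp add: hshift_def[abs_def] lin_lext)

lemma hshift_basis[simp]: "hshift s (basis w) = basis (map (\<lambda>i. i + s) w)"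
  by (simp add: hshift_def)

lemma hshift_add: "hshift s (x + y) = hshift s x + hshift s y" using lin_add[OF lin_hshift] .

lemma hshift_diff: "hshift s (x - y) = hshift s x - hshift s y" using lin_diff[OF lin_hshift] .

lemma hshift_smul: "hshift s (smul c x) = smul c (hshift s x)" using lin_smul[OF lin_hshift] .

lemma hshift_hmul: "hshift s (hmul a b) = hmul (hshift s a) (hshift s b)"
proof -
  have on_word: "hshift s (hmul a (basis w)) = hmul (hshift s a) (hshift s (basis w))" for w
    by (rule lin_eqI[OF lin_comp[OF lin_hshift lin_hmul_left] lin_comp[OF lin_hmul_left lin_hshift]]) simp
  show ?thesis
    by (rule lin_eqI[OF lin_comp[OF lin_hshift lin_hmul_right] lin_comp[OF lin_hmul_right lin_hshift]])
       (rule on_word)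
qed

lemma hshift_hshift: "hshift s (hshift t h) = hshift (s + t) h"
  by (rule lin_eqI[OF lin_comp[OF lin_hshift lin_hshift] lin_hshift]) (simp add: comp_def ac_simps)

definition qdiff :: K where "qdiff = qq - inverse qq"

lemma hTinv_qdiff: "hTinv k = hT k - smul qdiff (basis [])" by (simp add: hTinv_def qdiff_def)

definition unit_exp :: "int \<Rightarrow> bool" where "unit_exp e \<longleftrightarrow> e = 1 \<or> e = -1"

lemma unit_exp_gam[simp]: "unit_exp (gam i j)" "unit_exp (- gam i j)" by (auto simp: unit_exp_def gam_def)

lemma hshift_hT[simp]: "hshift s (hT k) = hT (k + s)" by (simp add: hT_def)

lemma hshift_hTinv[simp]: "hshift s (hTinv k) = hTinv (k + s)"
  by (simp add: hTinv_def hshift_diff hshift_smul hT_def)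

lemma hshift_hTpow: "unit_exp e \<Longrightarrow> hshift s (hTpow k e) = hTpow (k + s) e"
  by (auto simp: unit_exp_def hTpow_def)

definition valid_helt :: "helt \<Rightarrow> bool" where
  "valid_helt h \<longleftrightarrow> (\<forall>w\<in>Poly_Mapping.keys h. valid_word w)"

lemma valid_helt_basis[simp]: "valid_helt (basis w) \<longleftrightarrow> valid_word w" by (simp add: valid_helt_def)

lemma valid_helt_diff: "valid_helt x \<Longrightarrow> valid_helt y \<Longrightarrow> valid_helt (x - y)"
  unfolding valid_helt_def using keys_diff[of x y] by blast

lemma valid_helt_smul: "valid_helt x \<Longrightarrow> valid_helt (smul c x)"
  unfolding valid_helt_def using keys_smul[of c x] by blast

lemma valid_helt_lext: "(\<And>b. b \<in> Poly_Mapping.keys x \<Longrightarrow> valid_helt (f b)) \<Longrightarrow> valid_helt (lext f x)"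
  unfolding valid_helt_def using keys_lext[of f x] by blast

lemma valid_word_append[simp]: "valid_word (v @ w) \<longleftrightarrow> valid_word v \<and> valid_word w"
  by (auto simp: valid_word_def)

lemma valid_word_Cons[simp]: "valid_word (k # w) \<longleftrightarrow> k \<noteq> 0 \<and> valid_word w"
  by (auto simp: valid_word_def)

lemma valid_word_Nil[simp]: "valid_word []" by (simp add: valid_word_def)

lemma valid_helt_hmul: "valid_helt a \<Longrightarrow> valid_helt b \<Longrightarrow> valid_helt (hmul a b)"
  unfolding hmul_lext by (intro valid_helt_lext) (auto simp: valid_helt_def)

lemma valid_helt_hshift: "valid_helt a \<Longrightarrow> valid_helt (hshift s a)"
  unfolding hshift_def by (intro valid_helt_lext) (auto simp: valid_helt_def valid_word_def)

lemma valid_helt_hTpow: "1 \<le> k \<Longrightarrow> unit_exp e \<Longrightarrow> valid_helt (hTpow k e)"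
  by (auto simp: unit_exp_def hTpow_def hTinv_def hT_def intro!: valid_helt_diff valid_helt_smul)

lemma valid_helt_hprod: "(\<And>x. x \<in> set xs \<Longrightarrow> valid_helt x) \<Longrightarrow> valid_helt (hprod xs)"
  by (induction xs) (auto intro: valid_helt_hmul)

definition hecke_ideal_gens :: "helt set" where
  "hecke_ideal_gens = {hmul (basis a) (hmul r (basis b)) | a b r. valid_word a \<and> valid_word b \<and> r \<in> hecke_rels}"

definition hecke_ideal :: "helt set" where "hecke_ideal = kspan hecke_ideal_gens"

lemma hecke_ideal_gensI: "valid_word a \<Longrightarrow> valid_word b \<Longrightarrow> r \<in> hecke_rels \<Longrightarrow> hmul (basis a) (hmul r (basis b)) \<in> hecke_ideal_gens"
  unfolding hecke_ideal_gens_def by blast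

lemma hecke_ideal_generator: "valid_word a \<Longrightarrow> valid_word b \<Longrightarrow> r \<in> hecke_rels \<Longrightarrow> hmul (basis a) (hmul r (basis b)) \<in> hecke_ideal"
  unfolding hecke_ideal_def by (rule kspan_gen) (rule hecke_ideal_gensI)

lemma hecke_rel_in_ideal: "r \<in> hecke_rels \<Longrightarrow> r \<in> hecke_ideal"
  using hecke_ideal_generator[of "[]" "[]" r] by simp

lemma hecke_ideal_add: "x \<in> hecke_ideal \<Longrightarrow> y \<in> hecke_ideal \<Longrightarrow> x + y \<in> hecke_ideal" unfolding hecke_ideal_def by (rule kspan_add)

lemma hecke_ideal_diff: "x \<in> hecke_ideal \<Longrightarrow> y \<in> hecke_ideal \<Longrightarrow> x - y \<in> hecke_ideal" unfolding hecke_ideal_def by (rule kspan_diff)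

lemma hecke_ideal_smul: "x \<in> hecke_ideal \<Longrightarrow> smul c x \<in> hecke_ideal" unfolding hecke_ideal_def by (rule kspan_smul)

lemma hecke_ideal_zero: "0 \<in> hecke_ideal" unfolding hecke_ideal_def by (rule kspan.zero)

lemma hecke_ideal_mult_left:
  assumes "valid_helt c" "h \<in> hecke_ideal" shows "hmul c h \<in> hecke_ideal"
  using lin_hmul_right assms(2)[unfolded hecke_ideal_def] unfolding hecke_ideal_def
proof (rule kspan_lin_image)
  fix s assume "s \<in> hecke_ideal_gens"
  then obtain a b r where s: "s = hmul (basis a) (hmul r (basis b))" "valid_word a" "valid_word b" "r \<in> hecke_rels"
    by (auto simp: hecke_ideal_gens_def)
  have "hmul c s = lext (\<lambda>v. hmul (basis v) s) c"
    by (rule lin_expand[OF lin_hmul_left])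
  also have "\<dots> \<in> kspan hecke_ideal_gens"
  proof (rule kspan_lext)
    fix v assume "v \<in> Poly_Mapping.keys c"
    then have "valid_word v" using assms(1) by (auto simp: valid_helt_def)
    have "hmul (basis v) s = hmul (basis (v @ a)) (hmul r (basis b))"
      by (simp add: s(1) hmul_assoc[symmetric])
    then show "hmul (basis v) s \<in> kspan hecke_ideal_gens"
      using s \<open>valid_word v\<close> hecke_ideal_gensI[of "v @ a" b r] by (simp add: kspan_gen)
  qed
  finally show "hmul c s \<in> kspan hecke_ideal_gens" .
qed

lemma hecke_ideal_mult_right:
  assumes "valid_helt c" "h \<in> hecke_ideal" shows "hmul h c \<in> hecke_ideal"
  using lin_hmul_left assms(2)[unfolded hecke_ideal_def] unfolding hecke_ideal_def
proof (rule kspan_lin_image)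
  fix s assume "s \<in> hecke_ideal_gens"
  then obtain a b r where s: "s = hmul (basis a) (hmul r (basis b))" "valid_word a" "valid_word b" "r \<in> hecke_rels"
    by (auto simp: hecke_ideal_gens_def)
  have "hmul s c = lext (\<lambda>v. hmul s (basis v)) c"
    by (rule lin_expand[OF lin_hmul_right])
  also have "\<dots> \<in> kspan hecke_ideal_gens"
  proof (rule kspan_lext)
    fix v assume "v \<in> Poly_Mapping.keys c"
    then have "valid_word v" using assms(1) by (auto simp: valid_helt_def)
    have "hmul s (basis v) = hmul (basis a) (hmul r (basis (b @ v)))"
      by (simp add: s(1) hmul_assoc)
    then show "hmul s (basis v) \<in> kspan hecke_ideal_gens"
      using s \<open>valid_word v\<close> hecke_ideal_gensI[of a "b @ v" r] by (simp add: kspan_gen)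
  qed
  finally show "hmul s c \<in> kspan hecke_ideal_gens" .
qed

lemma hecke_rels_shift: "r \<in> hecke_rels \<Longrightarrow> hshift s r \<in> hecke_rels"
proof -
  assume "r \<in> hecke_rels"
  then consider (a) i where "1 \<le> i" "r = basis [i, i] - smul (qq - inverse qq) (basis [i]) - basis []"
    | (b) i where "1 \<le> i" "r = basis [i, Suc i, i] - basis [Suc i, i, Suc i]"
    | (c) i j where "1 \<le> i" "1 \<le> j" "i + 1 < j \<or> j + 1 < i" "r = basis [i, j] - basis [j, i]"
    unfolding hecke_rels_def by blast
  then show ?thesis
  proof cases
    case a then show ?thesis unfolding hecke_rels_def
      by (intro UnI1 UnI1 CollectI exI[of _ "i + s"]) (simp add: hshift_diff hshift_smul)
  next
    case b then show ?thesis unfolding hecke_rels_def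
      by (intro UnI1 UnI2 CollectI exI[of _ "i + s"]) (simp add: hshift_diff)
  next
    case c then show ?thesis unfolding hecke_rels_def
      by (intro UnI2 CollectI exI[of _ "i + s"] exI[of _ "j + s"]) (auto simp: hshift_diff)
  qed
qed

lemma hecke_ideal_shift: "h \<in> hecke_ideal \<Longrightarrow> hshift s h \<in> hecke_ideal"
  unfolding hecke_ideal_def
proof (erule kspan_lin_image[OF lin_hshift])
  fix g assume "g \<in> hecke_ideal_gens"
  then obtain a b r where s: "g = hmul (basis a) (hmul r (basis b))" "valid_word a" "valid_word b" "r \<in> hecke_rels"
    by (auto simp: hecke_ideal_gens_def)
  have "hshift s g = hmul (basis (map (\<lambda>i. i + s) a)) (hmul (hshift s r) (basis (map (\<lambda>i. i + s) b)))"
    by (simp add: s(1) hshift_hmul)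
  moreover have "valid_word (map (\<lambda>i. i + s) a)" "valid_word (map (\<lambda>i. i + s) b)"
    using s by (auto simp: valid_word_def)
  ultimately show "hshift s g \<in> kspan hecke_ideal_gens"
    using hecke_rels_shift[OF s(4)] hecke_ideal_gensI by (simp add: kspan_gen)
qed

lemma quadratic_rel: "1 \<le> k \<Longrightarrow> basis [k, k] - smul qdiff (basis [k]) - basis [] \<in> hecke_rels"
  unfolding hecke_rels_def qdiff_def by blast

lemma far_commutation_rel:
  "1 \<le> i \<Longrightarrow> 1 \<le> j \<Longrightarrow> i + 1 < j \<or> j + 1 < i \<Longrightarrow> basis [i, j] - basis [j, i] \<in> hecke_rels"
  unfolding hecke_rels_def by blast

lemma braid_rel_12: "basis [1, 2, 1] - basis [2, 1, 2] \<in> hecke_rels"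
  unfolding hecke_rels_def by (rule UnI1, rule UnI2, rule CollectI, rule exI[of _ 1]) (simp add: numeral_2_eq_2)

lemma hTpow_inverse:
  assumes "unit_exp e" shows "hmul (hTpow 1 e) (hTpow 1 (- e)) - basis [] \<in> hecke_ideal"
proof -
  have "hmul (hTpow 1 e) (hTpow 1 (- e)) - basis [] = basis [1, 1] - smul qdiff (basis [1]) - basis []"
    using assms by (auto simp: unit_exp_def hTpow_def hTinv_qdiff hT_def hmul_simps)
  then show ?thesis using hecke_rel_in_ideal[OF quadratic_rel[of 1]] by simp
qed

definition hecke_commute :: "helt \<Rightarrow> helt \<Rightarrow> bool" where
  "hecke_commute a b \<longleftrightarrow> hmul a b - hmul b a \<in> hecke_ideal"

lemma hecke_commute_hprod:
  assumes "\<And>x. x \<in> set L \<Longrightarrow> valid_helt x \<and> hecke_commute x t"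
  shows "hecke_commute (hprod L) t"
  using assms
proof (induction L)
  case Nil then show ?case by (simp add: hecke_commute_def hecke_ideal_zero)
next
  case (Cons x L)
  have x: "valid_helt x" "hecke_commute x t" using Cons.prems by auto
  have P: "valid_helt (hprod L)" using Cons.prems by (auto intro: valid_helt_hprod)
  have IH: "hecke_commute (hprod L) t" using Cons by auto
  have e: "hmul (hprod (x # L)) t - hmul t (hprod (x # L))
      = hmul x (hmul (hprod L) t - hmul t (hprod L)) + hmul (hmul x t - hmul t x) (hprod L)"
    by (simp add: hmul_simps hmul_assoc)
  show ?case unfolding hecke_commute_def e
    using hecke_ideal_add[OF hecke_ideal_mult_left[OF x(1) IH[unfolded hecke_commute_def]] hecke_ideal_mult_right[OF P x(2)[unfolded hecke_commute_def]]] .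
qed

lemma hecke_commute_far_hT: "1 \<le> k \<Longrightarrow> k + 1 < N \<Longrightarrow> hecke_commute (hT k) (hT N)"
  unfolding hecke_commute_def hT_def using far_commutation_rel[of k N] by (simp add: hecke_rel_in_ideal)

lemma hecke_commute_hTpow_left: "unit_exp e \<Longrightarrow> hecke_commute (hT k) b \<Longrightarrow> hecke_commute (hTpow k e) b"
  by (auto simp: hecke_commute_def unit_exp_def hTpow_def hTinv_qdiff hmul_simps)

lemma hecke_commute_sym: "hecke_commute a b \<Longrightarrow> hecke_commute b a"
  unfolding hecke_commute_def using hecke_ideal_smul[of _ "-1"] by (fastforce simp: smul_m1)

lemma hecke_commute_far_hTpow:
  assumes "1 \<le> k" "k + 1 < N" "unit_exp e" "unit_exp e'"
  shows "hecke_commute (hTpow k e) (hTpow N e')"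
proof -
  have "hecke_commute (hTpow N e') (hT k)"
    by (rule hecke_commute_hTpow_left[OF assms(4) hecke_commute_sym[OF hecke_commute_far_hT[OF assms(1,2)]]])
  then show ?thesis
    by (rule hecke_commute_hTpow_left[OF assms(3) hecke_commute_sym])
qed

lemma hecke_ideal_far_commute:
  assumes "1 \<le> k" "\<forall>x\<in>set v. k + 1 < x" "valid_word u"
  shows "basis (k # v @ u) - basis (v @ k # u) \<in> hecke_ideal"
  using assms(2)
proof (induction v)
  case Nil then show ?case by (simp add: hecke_ideal_zero)
next
  case (Cons x v)
  have r: "basis [k, x] - basis [x, k] \<in> hecke_rels"
    using Cons.prems assms(1) by (intro far_commutation_rel) auto
  have vx: "valid_word (v @ u)" using Cons.prems assms(3) by (auto simp: valid_word_def)
  have 1: "basis (k # x # v @ u) - basis (x # k # v @ u) \<in> hecke_ideal"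
    using hecke_ideal_generator[OF valid_word_Nil vx r] by (simp add: hmul_diff_left)
  have 2: "basis (x # k # v @ u) - basis (x # v @ k # u) \<in> hecke_ideal"
    using hecke_ideal_mult_left[of "basis [x]", OF _ Cons.IH] Cons.prems by (simp add: hmul_diff_right)
  show ?case using hecke_ideal_add[OF 1 2] by simp
qed

lemma braid_mixed_signs:
  assumes "unit_exp x" "unit_exp y" "unit_exp z"
    and "\<not> (x = 1 \<and> y = -1 \<and> z = 1)" "\<not> (x = -1 \<and> y = 1 \<and> z = -1)"
  shows "hmul (hTpow 1 x) (hmul (hTpow 2 y) (hTpow 1 z))
       - hmul (hTpow 2 z) (hmul (hTpow 1 y) (hTpow 2 x)) \<in> hecke_ideal"
    (is "?D \<in> hecke_ideal")
proof -
  define B where "B = basis [1, 2, 1] - basis [2::nat, 1, 2]"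
  define Q1 where "Q1 = basis [1, 1] - smul qdiff (basis [1]) - basis ([]::nat list)"
  define Q2 where "Q2 = basis [2, 2] - smul qdiff (basis [2]) - basis ([]::nat list)"
  have B: "B \<in> hecke_ideal" unfolding B_def by (rule hecke_rel_in_ideal[OF braid_rel_12])
  have Q1: "Q1 \<in> hecke_ideal" unfolding Q1_def by (rule hecke_rel_in_ideal[OF quadratic_rel]) simp
  have Q2: "Q2 \<in> hecke_ideal" unfolding Q2_def by (rule hecke_rel_in_ideal[OF quadratic_rel]) simp
  have "x = 1 \<or> x = -1" "y = 1 \<or> y = -1" "z = 1 \<or> z = -1"
    using assms(1-3) by (auto simp: unit_exp_def)
  then have "?D = B \<or> ?D = B - smul qdiff Q1 + smul qdiff Q2"
    using assms(4,5) unfolding B_def Q1_def Q2_def hTpow_def hTinv_qdiff hT_def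
    by (elim disjE) (simp_all add: hmul_simps smul_diff)
  moreover have "B - smul qdiff Q1 + smul qdiff Q2 \<in> hecke_ideal"
    using B Q1 Q2 by (intro hecke_ideal_add hecke_ideal_diff hecke_ideal_smul)
  ultimately show ?thesis
    using B by auto
qed

lemma lin_tens: "lin (tens I)" by (simp add: tens_def[abs_def] lin_lext)

lemma tens_basis[simp]: "tens I (basis w) = basis (I, w)" by (simp add: tens_def)

lemma tens_add: "tens I (x + y) = tens I x + tens I y" using lin_add[OF lin_tens] .

lemma tens_diff: "tens I (x - y) = tens I x - tens I y" using lin_diff[OF lin_tens] .

lemma tens_smul: "tens I (smul c x) = smul c (tens I x)" using lin_smul[OF lin_tens] .

lemma lin_tensv: "lin (\<lambda>v. tensv v u)" by (simp add: tensv_def lin_lext)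

lemma tensv_basis[simp]: "tensv (basis J) u = basis (J, u)" by (simp add: tensv_def)

lemma tensv_smul: "tensv (smul c v) u = smul c (tensv v u)" using lin_smul[OF lin_tensv] .

lemma tensv_add: "tensv (v + w) u = tensv v u + tensv w u" using lin_add[OF lin_tensv] .

lemma lin_Le: "lin (Le i)" by (simp add: Le_def lin_lext)

lemma Le_basis[simp]: "Le i (basis (I, u)) = basis (I @ [i], u)" by (simp add: Le_def)

lemma Le_diff: "Le i (x - y) = Le i x - Le i y" using lin_diff[OF lin_Le] .

lemma Le_smul: "Le i (smul c x) = smul c (Le i x)" using lin_smul[OF lin_Le] .

lemma Le_zero[simp]: "Le i 0 = 0" using lin_zero[OF lin_Le] .

lemma Le_sum: "Le i (sum f S) = (\<Sum>s\<in>S. Le i (f s))" using lin_sum[OF lin_Le] .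

lemma Le_tens: "Le a (tens I h) = tens (I @ [a]) h"
  by (rule lin_eqI[OF lin_comp[OF lin_Le lin_tens] lin_tens]) simp

lemma lin_Lh: "lin (Lh h)" by (simp add: Lh_def lin_lext)

lemma Lh_basis[simp]: "Lh h (basis (I, u)) = tens I (hmul (hshift (length I) h) (basis u))"
  by (simp add: Lh_def)

lemma Lh_diff: "Lh h (x - y) = Lh h x - Lh h y" using lin_diff[OF lin_Lh] .

lemma Lh_smul: "Lh h (smul c x) = smul c (Lh h x)" using lin_smul[OF lin_Lh] .

lemma Lh_zero[simp]: "Lh h 0 = 0" using lin_zero[OF lin_Lh] .

lemma Lh_sum: "Lh h (sum f S) = (\<Sum>s\<in>S. Lh h (f s))" using lin_sum[OF lin_Lh] .

lemma Lh_tens: "Lh h' (tens I h) = tens I (hmul (hshift (length I) h') h)"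
  by (rule lin_eqI[OF lin_comp[OF lin_Lh lin_tens] lin_comp[OF lin_tens lin_hmul_right]]) simp

lemma Lh_eq_lext: "Lh h x = lext (\<lambda>b. tens (fst b) (hmul (hshift (length (fst b)) h) (basis (snd b)))) x"
  by (simp add: Lh_def case_prod_unfold)

lemma lin_Lh_operator: "lin (\<lambda>h. Lh h x)"
  unfolding lin_def Lh_eq_lext
  by (simp add: hshift_add hshift_smul hmul_add_left hmul_smul_left tens_add tens_smul lext_fun_add lext_fun_smul)

lemma Lh_diff_operator: "Lh (h1 - h2) x = Lh h1 x - Lh h2 x" using lin_diff[OF lin_Lh_operator] .

lemma Lh_smul_operator: "Lh (smul c h) x = smul c (Lh h x)" using lin_smul[OF lin_Lh_operator] .

lemma Lh_Nil[simp]: "Lh (basis []) x = x"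
  by (rule lin_eqI[OF lin_Lh lin_id]) auto

lemma Lh_mult: "Lh a (Lh b x) = Lh (hmul a b) x"
  by (rule lin_eqI[OF lin_comp[OF lin_Lh lin_Lh] lin_Lh])
     (auto simp: Lh_tens hmul_assoc hshift_hmul)

lemma Lh_Le: "Lh h (Le a x) = Le a (Lh (hshift 1 h) x)"
  by (rule lin_eqI[OF lin_comp[OF lin_Lh lin_Le] lin_comp[OF lin_Le lin_Lh]])
     (auto simp: Le_tens hshift_hshift)

lemma lin_LT1pow: "lin (LT1pow e)" by (simp add: LT1pow_def lin_Lh)

lemma LT1pow_add: "LT1pow e (x + y) = LT1pow e x + LT1pow e y" using lin_add[OF lin_LT1pow] .

lemma LT1pow_smul: "LT1pow e (smul c x) = smul c (LT1pow e x)" using lin_smul[OF lin_LT1pow] .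

lemma LT1pow_zero[simp]: "LT1pow e 0 = 0" using lin_zero[OF lin_LT1pow] .

lemma LT1pow_minus_one: "LT1pow (-1) z = LT1pow 1 z - smul qdiff z"
  by (simp add: LT1pow_def hTpow_def hTinv_qdiff Lh_diff_operator Lh_smul_operator)

lemma lin_Kinv: "lin (Kinv m i)" by (simp add: Kinv_def lin_lext)

lemma Kinv_basis[simp]: "Kinv m i (basis (I, u)) = smul (inverse (qi m i) ^ count_list I i) (basis (I, u))"
  by (simp add: Kinv_def)

lemma Kinv_tens: "Kinv m i (tens I h) = smul (inverse (qi m i) ^ count_list I i) (tens I h)"
  by (rule lin_eqI[OF lin_comp[OF lin_Kinv lin_tens] lin_smul_const[OF lin_tens]]) simp

lemma Kinv_Lh: "Kinv m i (Lh h x) = Lh h (Kinv m i x)"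
  by (rule lin_eqI[OF lin_comp[OF lin_Kinv lin_Lh] lin_comp[OF lin_Lh lin_Kinv]])
     (auto simp: Kinv_tens Lh_smul)

lemma Kinv_smul: "Kinv m j (smul c x) = smul c (Kinv m j x)" using lin_smul[OF lin_Kinv] .

lemma Kinv_zero[simp]: "Kinv m j 0 = 0" using lin_zero[OF lin_Kinv] .

lemma Kinv_sum: "Kinv m j (sum f S) = (\<Sum>s\<in>S. Kinv m j (f s))" using lin_sum[OF lin_Kinv] .

lemma Kinv_LT1pow: "Kinv m j (LT1pow e x) = LT1pow e (Kinv m j x)" by (simp add: LT1pow_def Kinv_Lh)

text \<open>The \<open>k\<close>-th summand of \<open>Lstar m j\<close> on \<open>e\<^sub>I \<otimes> h\<close> (with \<open>h\<close> in place of \<open>T\<^sub>u\<close>), split into its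
  scalar, the index list with the (1-based) position \<open>k\<close> removed, and its Hecke word.\<close>

definition Lstar_coeff :: "nat \<Rightarrow> nat \<Rightarrow> nat list \<Rightarrow> nat \<Rightarrow> K" where
  "Lstar_coeff m j I k = (-1) ^ (par m j * (\<Sum>p\<in>{k+1..length I}. par m (I ! (p - 1))))
               * (\<Prod>p\<in>{1..<k}. if I ! (p - 1) = j then inverse (qi m j) else 1)"

definition remove_pos :: "nat list \<Rightarrow> nat \<Rightarrow> nat list" where
  "remove_pos I k = take (k - 1) I @ drop k I"

definition Lstar_word :: "nat \<Rightarrow> nat list \<Rightarrow> nat \<Rightarrow> helt" where
  "Lstar_word j I k = hprod (map (\<lambda>p. hTpow (p - 1) (- gam j (I ! (p - 1)))) (rev [k+1..<length I + 1]))"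

definition Lstar_term :: "nat \<Rightarrow> nat \<Rightarrow> nat list \<Rightarrow> helt \<Rightarrow> nat \<Rightarrow> tvec" where
  "Lstar_term m j I h k = (if I ! (k - 1) = j then smul (Lstar_coeff m j I k) (tens (remove_pos I k) (hmul (Lstar_word j I k) h)) else 0)"

lemma lin_Lstar: "lin (Lstar m j)" by (simp add: Lstar_def lin_lext)

lemma Lstar_basis: "Lstar m j (basis (I, u)) = (\<Sum>k\<in>{1..length I}. Lstar_term m j I (basis u) k)"
  unfolding Lstar_def Lstar_term_def Lstar_coeff_def remove_pos_def Lstar_word_def by simp

lemma lin_Lstar_term: "lin (\<lambda>h. Lstar_term m j I h k)"
  unfolding Lstar_term_def by (intro lin_if lin_smul_const lin_comp[OF lin_tens lin_hmul_right] lin_zero_map)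

lemma Lstar_tens: "Lstar m j (tens I h) = (\<Sum>k\<in>{1..length I}. Lstar_term m j I h k)"
  by (rule lin_eqI[OF lin_comp[OF lin_Lstar lin_tens] lin_sum_fun[OF lin_Lstar_term]]) (simp add: Lstar_basis)

lemma Lstar_add: "Lstar m j (x + y) = Lstar m j x + Lstar m j y" using lin_add[OF lin_Lstar] .

lemma Lstar_smul: "Lstar m j (smul c x) = smul c (Lstar m j x)" using lin_smul[OF lin_Lstar] .

lemma Lstar_zero[simp]: "Lstar m j 0 = 0" using lin_zero[OF lin_Lstar] .

lemma Lstar_Nil: "Lstar m j (basis ([], u)) = 0" by (simp add: Lstar_basis)

lemma validv_iff_keys: "validv m n x \<longleftrightarrow> (\<forall>b\<in>Poly_Mapping.keys x. valid_idx m n (fst b) \<and> valid_word (snd b))"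
  by (auto simp: validv_def)

lemma validv_lext: "(\<And>b. b \<in> Poly_Mapping.keys x \<Longrightarrow> validv m n (f b)) \<Longrightarrow> validv m n (lext f x)"
  unfolding validv_iff_keys using keys_lext[of f x] by blast

lemma validv_basis[simp]: "validv m n (basis (I, u)) \<longleftrightarrow> valid_idx m n I \<and> valid_word u"
  by (simp add: validv_def)

lemma validv_zero[simp]: "validv m n 0" by (simp add: validv_def)

lemma validv_add: "validv m n x \<Longrightarrow> validv m n y \<Longrightarrow> validv m n (x + y)"
  unfolding validv_iff_keys using keys_add[of x y] by blast

lemma validv_smul: "validv m n x \<Longrightarrow> validv m n (smul c x)"
  unfolding validv_iff_keys using keys_smul[of c x] by blast

lemma validv_sum: "(\<And>s. s \<in> S \<Longrightarrow> validv m n (f s)) \<Longrightarrow> validv m n (sum f S)"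
  by (induction S rule: infinite_finite_induct) (auto intro: validv_add)

lemma validv_expand:
  assumes "lin g" "\<And>I u. valid_idx m n I \<Longrightarrow> valid_word u \<Longrightarrow> validv m' n' (g (basis (I, u)))"
    "validv m n x"
  shows "validv m' n' (g x)"
proof -
  have e: "g x = lext (\<lambda>b. g (basis b)) x" by (rule lin_expand[OF assms(1)])
  show ?thesis unfolding e
  proof (rule validv_lext)
    fix b assume "b \<in> Poly_Mapping.keys x"
    then obtain I u where b: "b = (I, u)" "valid_idx m n I" "valid_word u"
      using assms(3) by (cases b) (auto simp: validv_def)
    show "validv m' n' (g (basis b))" using assms(2)[OF b(2,3)] b(1) by simp
  qed
qed

lemma validv_tens: "valid_idx m n I \<Longrightarrow> valid_helt h \<Longrightarrow> validv m n (tens I h)"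
  unfolding tens_def by (rule validv_lext) (auto simp: valid_helt_def)

lemma valid_idx_append[simp]: "valid_idx m n (I @ J) \<longleftrightarrow> valid_idx m n I \<and> valid_idx m n J"
  by (auto simp: valid_idx_def)

lemma valid_idx_single[simp]: "valid_idx m n [a] \<longleftrightarrow> a \<in> {1..m+n}"
  by (auto simp: valid_idx_def)

lemma valid_idx_remove_pos: "valid_idx m n I \<Longrightarrow> valid_idx m n (remove_pos I k)"
  unfolding valid_idx_def remove_pos_def using set_take_subset set_drop_subset by fastforce

lemma validv_Kinv: "validv m n x \<Longrightarrow> validv m n (Kinv m' i x)"
  by (rule validv_expand[OF lin_Kinv]) (auto intro!: validv_smul)

lemma valid_helt_Lstar_word: "1 \<le> k \<Longrightarrow> valid_helt (Lstar_word j I k)"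
  unfolding Lstar_word_def by (rule valid_helt_hprod) (auto intro!: valid_helt_hTpow)

lemma validv_Lstar_term: "valid_idx m n I \<Longrightarrow> valid_helt h \<Longrightarrow> 1 \<le> k \<Longrightarrow> validv m n (Lstar_term m' j I h k)"
  unfolding Lstar_term_def by (auto intro!: validv_smul validv_tens valid_idx_remove_pos valid_helt_hmul valid_helt_Lstar_word)

lemma validv_Lstar: "validv m n x \<Longrightarrow> validv m n (Lstar m' j x)"
  by (rule validv_expand[OF lin_Lstar]) (auto simp: Lstar_basis intro!: validv_sum validv_Lstar_term)

section \<open>The relation subspace\<close>

lemma Rel_add: "x \<in> Rel m n \<Longrightarrow> y \<in> Rel m n \<Longrightarrow> x + y \<in> Rel m n" unfolding Rel_def by (rule kspan_add)

lemma Rel_smul: "x \<in> Rel m n \<Longrightarrow> smul c x \<in> Rel m n" unfolding Rel_def by (rule kspan_smul)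

lemma Rel_zero: "0 \<in> Rel m n" unfolding Rel_def by (rule kspan.zero)

lemma Rel_sum: "(\<And>s. s \<in> S \<Longrightarrow> f s \<in> Rel m n) \<Longrightarrow> sum f S \<in> Rel m n" unfolding Rel_def by (rule kspan_sum)

lemma Rel_gen: "s \<in> relgen m n \<Longrightarrow> s \<in> Rel m n" unfolding Rel_def by (rule kspan_gen)

lemma relgen_heckeI: "valid_idx m n I \<Longrightarrow> valid_word a \<Longrightarrow> valid_word b \<Longrightarrow> r \<in> hecke_rels
  \<Longrightarrow> tens I (hmul (basis a) (hmul r (basis b))) \<in> relgen m n"
  unfolding relgen_def by blast

lemma relgen_actionI: "valid_idx m n I \<Longrightarrow> valid_word u \<Longrightarrow> 1 \<le> k \<Longrightarrow> k < length I
  \<Longrightarrow> tensv (actT m I k) u - basis (I, k # u) \<in> relgen m n"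
  unfolding relgen_def by blast

lemma Rel_tens: assumes "valid_idx m n I" "h \<in> hecke_ideal" shows "tens I h \<in> Rel m n"
  using lin_tens assms(2)[unfolded hecke_ideal_def] unfolding Rel_def
proof (rule kspan_lin_image)
  fix s assume "s \<in> hecke_ideal_gens"
  then show "tens I s \<in> kspan (relgen m n)"
    using assms(1) by (auto simp: hecke_ideal_gens_def intro!: kspan_gen relgen_heckeI)
qed

lemma Le_tensv: "Le a (tensv v u) = tensv (lext (\<lambda>J. basis (J @ [a])) v) u"
  by (rule lin_eqI[OF lin_comp[OF lin_Le lin_tensv] lin_comp[OF lin_tensv lin_lext]]) simp

lemma actT_append:
  assumes "1 \<le> k" "k < length I"
  shows "lext (\<lambda>J. basis (J @ [a])) (actT m I k) = actT m (I @ [a]) k"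
proof -
  have e: "(I @ [a]) ! (k - 1) = I ! (k - 1)" "(I @ [a]) ! k = I ! k"
    using assms by (auto simp: nth_append)
  have kk: "k - 1 < length I" using assms by simp
  have u: "(I @ [a])[k - 1 := x, k := y] = I[k - 1 := x, k := y] @ [a]" for x y
    using assms kk by (simp add: list_update_append)
  show ?thesis
    unfolding actT_def Let_def e u by (simp add: lext_add lext_smul)
qed

lemma relgen_cases:
  assumes "s \<in> relgen m n"
  obtains (hecke) I a b r where "s = tens I (hmul (basis a) (hmul r (basis b)))"
      "valid_idx m n I" "valid_word a" "valid_word b" "r \<in> hecke_rels"
  | (action) I k u where "s = tensv (actT m I k) u - basis (I, k # u)"
      "valid_idx m n I" "valid_word u" "1 \<le> k" "k < length I"
  using assms unfolding relgen_def by blast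

lemma Rel_Le: assumes "a \<in> {1..m+n}" "z \<in> Rel m n" shows "Le a z \<in> Rel m n"
  using lin_Le assms(2)[unfolded Rel_def] unfolding Rel_def
proof (rule kspan_lin_image)
  fix s assume "s \<in> relgen m n"
  then show "Le a s \<in> kspan (relgen m n)"
  proof (cases rule: relgen_cases)
    case hecke
    then show ?thesis using assms(1) by (simp add: Le_tens kspan_gen relgen_heckeI)
  next
    case (action I k u)
    then have "Le a s = tensv (actT m (I @ [a]) k) u - basis (I @ [a], k # u)"
      by (simp add: Le_diff Le_tensv actT_append)
    then show ?thesis using assms(1) action by (simp add: kspan_gen relgen_actionI)
  qed
qed

lemma Lh_tensv_basis:
  assumes "\<And>J. J \<in> Poly_Mapping.keys v \<Longrightarrow> length J = d"
  shows "Lh (basis w) (tensv v u) = tensv v (map (\<lambda>i. i + d) w @ u)"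
proof -
  have "Lh (basis w) (tensv v u) = lext (\<lambda>J. basis (J, map (\<lambda>i. i + length J) w @ u)) v"
    by (rule lin_eqI[OF lin_comp[OF lin_Lh lin_tensv] lin_lext]) simp
  also have "\<dots> = tensv v (map (\<lambda>i. i + d) w @ u)"
    unfolding tensv_def by (rule lext_cong) (simp add: assms)
  finally show ?thesis .
qed

lemma keys_actT: "J \<in> Poly_Mapping.keys (actT m I k) \<Longrightarrow> length J = length I"
  unfolding actT_def Let_def
  by (auto split: if_splits dest!: subsetD[OF keys_add] subsetD[OF keys_smul])

lemma Lh_basis_action_rel:
  assumes "valid_idx m n I" "valid_word u" "1 \<le> k" "k < length I" "valid_word w"
  shows "Lh (basis w) (tensv (actT m I k) u - basis (I, k # u)) \<in> Rel m n"
proof -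
  define w' where "w' = map (\<lambda>i. i + length I) w"
  \<comment> \<open>the letters of the shifted word exceed \<open>k + 1\<close>, so it commutes with \<open>T\<^sub>k\<close> in the Hecke algebra\<close>
  have far: "\<forall>x\<in>set w'. k + 1 < x"
  proof
    fix x assume "x \<in> set w'"
    then obtain y where y: "y \<in> set w" "x = y + length I" by (auto simp: w'_def)
    have "y \<noteq> 0" using y(1) assms(5) unfolding valid_word_def by metis
    with y(2) assms(4) show "k + 1 < x" by simp
  qed
  have "Lh (basis w) (tensv (actT m I k) u - basis (I, k # u))
      = (tensv (actT m I k) (w' @ u) - basis (I, k # w' @ u))
        + tens I (basis (k # w' @ u) - basis (w' @ k # u))"
    by (simp add: Lh_diff Lh_tensv_basis keys_actT w'_def tens_diff)
  moreover have "tensv (actT m I k) (w' @ u) - basis (I, k # w' @ u) \<in> Rel m n"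
    using assms by (intro Rel_gen relgen_actionI) (auto simp: w'_def valid_word_def)
  moreover have "tens I (basis (k # w' @ u) - basis (w' @ k # u)) \<in> Rel m n"
    using Rel_tens[OF assms(1) hecke_ideal_far_commute[OF assms(3) far assms(2)]] .
  ultimately show ?thesis by (simp add: Rel_add)
qed

lemma Rel_Lh: assumes "valid_helt h" "z \<in> Rel m n" shows "Lh h z \<in> Rel m n"
  using lin_Lh assms(2)[unfolded Rel_def] unfolding Rel_def
proof (rule kspan_lin_image)
  fix s assume "s \<in> relgen m n"
  then show "Lh h s \<in> kspan (relgen m n)"
  proof (cases rule: relgen_cases)
    case (hecke I a b r)
    then have "hmul (hshift (length I) h) (hmul (basis a) (hmul r (basis b))) \<in> hecke_ideal"
      using assms(1) by (intro hecke_ideal_mult_left valid_helt_hshift hecke_ideal_generator)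
    then show ?thesis using hecke Rel_tens[of m n I] by (simp add: Lh_tens Rel_def)
  next
    case (action I k u)
    have "Lh h s = lext (\<lambda>w. Lh (basis w) s) h" by (rule lin_expand[OF lin_Lh_operator])
    also have "\<dots> \<in> kspan (relgen m n)"
      using action assms(1) Lh_basis_action_rel[of m n I u k]
      by (intro kspan_lext) (auto simp: valid_helt_def Rel_def)
    finally show ?thesis .
  qed
qed

lemma Lh_hecke_ideal: assumes "validv m n x" "h \<in> hecke_ideal" shows "Lh h x \<in> Rel m n"
proof -
  have "Lh h x = lext (\<lambda>b. Lh h (basis b)) x" by (rule lin_expand[OF lin_Lh])
  also have "\<dots> \<in> Rel m n" unfolding Rel_def
  proof (rule kspan_lext)
    fix b assume "b \<in> Poly_Mapping.keys x"
    then obtain I u where b: "b = (I, u)" "valid_idx m n I" "valid_word u"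
      using assms(1) by (cases b) (auto simp: validv_def)
    show "Lh h (basis b) \<in> kspan (relgen m n)"
      using Rel_tens[OF b(2) hecke_ideal_mult_right[OF _ hecke_ideal_shift[OF assms(2)]], of "basis u"] b
      by (simp add: Rel_def)
  qed
  finally show ?thesis .
qed

lemma Rel_lin_diff:
  assumes "lin g" "lin h" "validv m n x"
    "\<And>I u. valid_idx m n I \<Longrightarrow> valid_word u \<Longrightarrow> g (basis (I, u)) - h (basis (I, u)) \<in> Rel m n"
  shows "g x - h x \<in> Rel m n"
  unfolding Rel_def
proof (rule kspan_lin_diff[OF assms(1,2)])
  fix b assume "b \<in> Poly_Mapping.keys x"
  then obtain I u where b: "b = (I, u)" "valid_idx m n I" "valid_word u"
    using assms(3) by (cases b) (auto simp: validv_def)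
  show "g (basis b) - h (basis b) \<in> kspan (relgen m n)" using assms(4)[OF b(2,3)] b by (simp add: Rel_def)
qed

lemma teq_refl: "teq m n x x" by (simp add: teq_def Rel_zero)

lemma teq_trans[trans]: "teq m n x y \<Longrightarrow> teq m n y z \<Longrightarrow> teq m n x z"
  unfolding teq_def using Rel_add by fastforce

lemma teq_sym: "teq m n x y \<Longrightarrow> teq m n y x"
  unfolding teq_def using Rel_smul[of "x - y" m n "-1"] by (simp add: smul_m1)

lemma teq_smul: "teq m n x y \<Longrightarrow> teq m n (smul c x) (smul c y)"
  unfolding teq_def using Rel_smul by (fastforce simp: smul_diff[symmetric])

lemma teq_add: "teq m n x y \<Longrightarrow> teq m n x' y' \<Longrightarrow> teq m n (x + x') (y + y')"
  unfolding teq_def using Rel_add by (fastforce simp: algebra_simps)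

lemma teq_Le: "a \<in> {1..m+n} \<Longrightarrow> teq m n x y \<Longrightarrow> teq m n (Le a x) (Le a y)"
  unfolding teq_def using Rel_Le by (fastforce simp: Le_diff[symmetric])

lemma teq_Lh: "valid_helt h \<Longrightarrow> teq m n x y \<Longrightarrow> teq m n (Lh h x) (Lh h y)"
  unfolding teq_def using Rel_Lh by (fastforce simp: Lh_diff[symmetric])

lemma teq_Lh_hecke_ideal: "validv m n x \<Longrightarrow> h - h' \<in> hecke_ideal \<Longrightarrow> teq m n (Lh h x) (Lh h' x)"
  unfolding teq_def using Lh_hecke_ideal by (fastforce simp: Lh_diff_operator[symmetric])

lemma LT1pow_inverse: "unit_exp e \<Longrightarrow> validv m n z \<Longrightarrow> teq m n (LT1pow e (LT1pow (- e) z)) z"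
  using teq_Lh_hecke_ideal[OF _ hTpow_inverse, of m n z e] by (simp add: LT1pow_def Lh_mult)

section \<open>Commuting \<open>L(e\<^sup>*)\<close> with \<open>L(e\<^sub>a)\<close>, \<open>K\<close> and \<open>T\<^sub>1\<close>\<close>

lemma Lstar_coeff_snoc:
  assumes "1 \<le> k" "k \<le> length I"
  shows "Lstar_coeff m j (I @ [a]) k = psign m j a * Lstar_coeff m j I k"
proof -
  have s: "(\<Sum>p\<in>{k+1..length (I @ [a])}. par m ((I @ [a]) ! (p - 1)))
         = (\<Sum>p\<in>{k+1..length I}. par m (I ! (p - 1))) + par m a"
  proof -
    have "{k+1..length (I @ [a])} = insert (length I + 1) {k+1..length I}" using assms by auto
    then have "(\<Sum>p\<in>{k+1..length (I @ [a])}. par m ((I @ [a]) ! (p - 1)))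
       = par m a + (\<Sum>p\<in>{k+1..length I}. par m ((I @ [a]) ! (p - 1)))" by simp
    also have "(\<Sum>p\<in>{k+1..length I}. par m ((I @ [a]) ! (p - 1))) = (\<Sum>p\<in>{k+1..length I}. par m (I ! (p - 1)))"
      by (rule sum.cong) (auto simp: nth_append)
    finally show ?thesis by simp
  qed
  have pr: "(\<Prod>p\<in>{1..<k}. if (I @ [a]) ! (p - 1) = j then inverse (qi m j) else 1)
          = (\<Prod>p\<in>{1..<k}. if I ! (p - 1) = j then inverse (qi m j) else 1)"
    by (rule prod.cong) (use assms in \<open>auto simp: nth_append\<close>)
  show ?thesis unfolding Lstar_coeff_def s pr psign_def
    by (simp add: distrib_left power_add mult_ac)
qed

lemma remove_pos_snoc: "1 \<le> k \<Longrightarrow> k \<le> length I \<Longrightarrow> remove_pos (I @ [a]) k = remove_pos I k @ [a]"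
  by (simp add: remove_pos_def)

lemma length_remove_pos: "1 \<le> k \<Longrightarrow> k \<le> length I \<Longrightarrow> length (remove_pos I k) = length I - 1"
  by (simp add: remove_pos_def)

lemma Lstar_word_snoc:
  assumes "1 \<le> k" "k \<le> length I"
  shows "Lstar_word j (I @ [a]) k = hmul (hTpow (length I) (- gam j a)) (Lstar_word j I k)"
proof -
  have r: "rev [k+1..<length (I @ [a]) + 1] = (length I + 1) # rev [k+1..<length I + 1]"
    using assms by (simp add: upt_Suc_append)
  have m: "map (\<lambda>p. hTpow (p - 1) (- gam j ((I @ [a]) ! (p - 1)))) (rev [k+1..<length I + 1])
         = map (\<lambda>p. hTpow (p - 1) (- gam j (I ! (p - 1)))) (rev [k+1..<length I + 1])"
    by (rule map_cong) (auto simp: nth_append)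
  show ?thesis unfolding Lstar_word_def r list.map(2) hprod_Cons m by (simp add: nth_append)
qed

lemma Lstar_term_snoc:
  assumes "1 \<le> k" "k \<le> length I"
  shows "Lstar_term m j (I @ [a]) h k = smul (psign m j a) (Le a (LT1pow (- gam j a) (Lstar_term m j I h k)))"
proof -
  have kk: "k - 1 < length I" using assms by simp
  have l: "Suc (length (remove_pos I k)) = length I" using assms by (simp add: length_remove_pos)
  have e: "(I @ [a]) ! (k - Suc 0) = I ! (k - Suc 0)" using kk by (simp add: nth_append)
  show ?thesis
  proof (cases "I ! (k - 1) = j")
    case True
    then show ?thesis
      using assms
      by (simp add: Lstar_term_def e Lstar_coeff_snoc remove_pos_snoc Lstar_word_snoc LT1pow_def Lh_smul Lh_tens
          Le_smul Le_tens hshift_hTpow l hmul_assoc)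
  next
    case False
    then show ?thesis by (simp add: Lstar_term_def e LT1pow_def)
  qed
qed

lemma prod_if_nth_eq_power_count:
  "(\<Prod>p\<in>{1..<length I + 1}. if I ! (p - 1) = j then c else 1) = (c::K) ^ count_list I j"
proof (induction I rule: rev_induct)
  case Nil
  then show ?case by simp
next
  case (snoc x I)
  have split: "{1..<length (I @ [x]) + 1} = insert (length I + 1) {1..<length I + 1}" by auto
  have "(\<Prod>p\<in>{1..<length (I @ [x]) + 1}. if (I @ [x]) ! (p - 1) = j then c else 1)
     = (if (I @ [x]) ! (length I + 1 - 1) = j then c else 1)
       * (\<Prod>p\<in>{1..<length I + 1}. if (I @ [x]) ! (p - 1) = j then c else 1)"
    unfolding split by (rule prod.insert) simp_all
  also have "(\<Prod>p\<in>{1..<length I + 1}. if (I @ [x]) ! (p - 1) = j then c else 1)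
     = (\<Prod>p\<in>{1..<length I + 1}. if I ! (p - 1) = j then c else 1)"
    by (rule prod.cong) (auto simp: nth_append)
  also have "\<dots> = c ^ count_list I j" by (rule snoc.IH)
  also have "(if (I @ [x]) ! (length I + 1 - 1) = j then c else 1) * c ^ count_list I j
     = c ^ count_list (I @ [x]) j" by simp
  finally show ?case .
qed

lemma Lstar_term_last:
  "Lstar_term m j (I @ [a]) h (length I + 1) = (if a = j then smul (inverse (qi m j) ^ count_list I j) (tens I h) else 0)"
proof -
  have P: "(\<Prod>p\<in>{1..<length I + 1}. if (I @ [a]) ! (p - 1) = j then inverse (qi m j) else 1)
        = inverse (qi m j) ^ count_list I j"
  proof -
    have "(\<Prod>p\<in>{1..<length I + 1}. if (I @ [a]) ! (p - 1) = j then inverse (qi m j) else 1)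
        = (\<Prod>p\<in>{1..<length I + 1}. if I ! (p - 1) = j then inverse (qi m j) else 1)"
      by (rule prod.cong) (auto simp: nth_append)
    then show ?thesis using prod_if_nth_eq_power_count[of I j "inverse (qi m j)"] by simp
  qed
  have S: "{length I + 1 + 1..length (I @ [a])} = {}" by simp
  have "Lstar_coeff m j (I @ [a]) (length I + 1) = inverse (qi m j) ^ count_list I j"
    unfolding Lstar_coeff_def S P by simp
  moreover have "remove_pos (I @ [a]) (length I + 1) = I" by (simp add: remove_pos_def)
  moreover have "Lstar_word j (I @ [a]) (length I + 1) = basis []" by (simp add: Lstar_word_def)
  moreover have "(I @ [a]) ! (length I + 1 - 1) = a" by simp
  ultimately show ?thesis by (cases "a = j") (simp_all add: Lstar_term_def)
qed

lemma Lstar_Le_commutation: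
  "Lstar m j (Le a x) = (if a = j then Kinv m j x else 0)
     + smul (psign m j a) (Le a (LT1pow (- gam j a) (Lstar m j x)))"
proof -
  have L1: "lin (\<lambda>x. Lstar m j (Le a x))" by (rule lin_comp[OF lin_Lstar lin_Le])
  have L2: "lin (\<lambda>x. (if a = j then Kinv m j x else 0)
     + smul (psign m j a) (Le a (LT1pow (- gam j a) (Lstar m j x))))"
    by (rule lin_plus[OF lin_if[OF lin_Kinv lin_zero_map] lin_smul_const[OF lin_comp[OF lin_Le lin_comp[OF lin_LT1pow lin_Lstar]]]])
  show ?thesis
  proof (rule lin_eqI[OF L1 L2])
    fix b :: "nat list \<times> hword"
    obtain I u where b: "b = (I, u)" by (cases b)
    have split: "{1..length (I @ [a])} = insert (length I + 1) {1..length I}" by auto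
    have "Lstar m j (Le a (basis b)) = (\<Sum>k\<in>{1..length I}. Lstar_term m j (I @ [a]) (basis u) k)
          + Lstar_term m j (I @ [a]) (basis u) (length I + 1)"
      by (simp add: b Lstar_basis split add.commute)
    also have "(\<Sum>k\<in>{1..length I}. Lstar_term m j (I @ [a]) (basis u) k)
       = smul (psign m j a) (Le a (LT1pow (- gam j a) (Lstar m j (basis b))))"
      by (simp add: b Lstar_basis Lstar_term_snoc smul_sum Le_sum LT1pow_def Lh_sum)
    finally show "Lstar m j (Le a (basis b)) = (if a = j then Kinv m j (basis b) else 0)
       + smul (psign m j a) (Le a (LT1pow (- gam j a) (Lstar m j (basis b))))"
      using Lstar_term_last[of m j I a "basis u"] by (cases "a = j") (simp_all add: b add.commute)
  qed
qed

lemma count_list_remove_pos: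
  assumes "1 \<le> k" "k \<le> length I"
  shows "count_list I j = count_list (remove_pos I k) j + (if I ! (k - 1) = j then 1 else 0)"
proof -
  have "I = take (k - 1) I @ I ! (k - 1) # drop k I"
    using id_take_nth_drop[of "k - 1" I] assms by simp
  then have "count_list I j = count_list (take (k - 1) I @ I ! (k - 1) # drop k I) j" by simp
  then show ?thesis by (simp add: remove_pos_def)
qed

lemma Kinv_Lstar_term: "Kinv m j (Lstar_term m' i I h k) = smul (inverse (qi m j) ^ count_list (remove_pos I k) j) (Lstar_term m' i I h k)"
  by (simp add: Lstar_term_def Kinv_smul Kinv_tens mult.commute)

lemma Lstar_Kinv:
  "Lstar m i (Kinv m j x) = smul (if i = j then inverse (qi m j) else 1) (Kinv m j (Lstar m i x))"
proof (rule lin_eqI[OF lin_comp[OF lin_Lstar lin_Kinv] lin_smul_const[OF lin_comp[OF lin_Kinv lin_Lstar]]])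
  fix b :: "nat list \<times> hword"
  obtain I u where b: "b = (I, u)" by (cases b)
  have "Lstar m i (Kinv m j (basis b)) = (\<Sum>k\<in>{1..length I}. smul (inverse (qi m j) ^ count_list I j) (Lstar_term m i I (basis u) k))"
    by (simp add: b Lstar_smul Lstar_basis smul_sum)
  also have "\<dots> = (\<Sum>k\<in>{1..length I}. smul (if i = j then inverse (qi m j) else 1) (Kinv m j (Lstar_term m i I (basis u) k)))"
  proof (rule sum.cong[OF refl])
    fix k assume k: "k \<in> {1..length I}"
    show "smul (inverse (qi m j) ^ count_list I j) (Lstar_term m i I (basis u) k)
        = smul (if i = j then inverse (qi m j) else 1) (Kinv m j (Lstar_term m i I (basis u) k))"
    proof (cases "I ! (k - 1) = i")
      case True
      then show ?thesis using count_list_remove_pos[of k I j] k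
        by (auto simp: Kinv_Lstar_term power_add mult.commute)
    next
      case False
      then show ?thesis by (simp add: Lstar_term_def)
    qed
  qed
  also have "\<dots> = smul (if i = j then inverse (qi m j) else 1) (Kinv m j (Lstar m i (basis b)))"
    by (simp add: b Lstar_basis Kinv_sum smul_sum)
  finally show "Lstar m i (Kinv m j (basis b)) = smul (if i = j then inverse (qi m j) else 1) (Kinv m j (Lstar m i (basis b)))" .
qed

lemma hecke_commute_Lstar_word:
  assumes "1 \<le> k" "k \<le> length I" "unit_exp e"
  shows "hecke_commute (Lstar_word j I k) (hTpow (length I + 1) e)"
  unfolding Lstar_word_def
  by (rule hecke_commute_hprod) (use assms in \<open>auto intro!: valid_helt_hTpow hecke_commute_far_hTpow\<close>)

lemma Lstar_term_hTpow:
  assumes "unit_exp e" "valid_idx m n I" "valid_word u" "k \<in> {1..length I}"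
  shows "Lstar_term m' i I (hmul (hTpow (length I + 1) e) (basis u)) k
       - Lh (hTpow 2 e) (Lstar_term m' i I (basis u) k) \<in> Rel m n"
proof (cases "I ! (k - 1) = i")
  case False
  then show ?thesis by (simp add: Lstar_term_def Rel_zero)
next
  case True
  let ?T = "hTpow (length I + 1) e" and ?W = "Lstar_word i I k"
  have len: "Suc (Suc (length (remove_pos I k))) = Suc (length I)"
    using assms(4) by (auto simp: length_remove_pos)
  have "Lstar_term m' i I (hmul ?T (basis u)) k - Lh (hTpow 2 e) (Lstar_term m' i I (basis u) k)
      = smul (Lstar_coeff m' i I k) (tens (remove_pos I k) (hmul (hmul ?W ?T - hmul ?T ?W) (basis u)))"
    using True assms(1)
    by (simp add: Lstar_term_def Lh_smul Lh_tens hshift_hTpow len hmul_assoc hmul_simps tens_diff smul_diff)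
  moreover have "tens (remove_pos I k) (hmul (hmul ?W ?T - hmul ?T ?W) (basis u)) \<in> Rel m n"
    using hecke_commute_Lstar_word[of k I e i] assms
    by (intro Rel_tens valid_idx_remove_pos hecke_ideal_mult_right) (auto simp: hecke_commute_def)
  ultimately show ?thesis by (simp add: Rel_smul)
qed

lemma Lstar_LT1pow:
  assumes "unit_exp e" "validv m n w"
  shows "teq m n (Lstar m' i (LT1pow e w)) (Lh (hTpow 2 e) (Lstar m' i w))"
  unfolding teq_def
proof (rule Rel_lin_diff[OF lin_comp[OF lin_Lstar lin_LT1pow] lin_comp[OF lin_Lh lin_Lstar] assms(2)])
  fix I u assume "valid_idx m n I" "valid_word u"
  have "Lstar m' i (LT1pow e (basis (I, u))) - Lh (hTpow 2 e) (Lstar m' i (basis (I, u)))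
     = (\<Sum>k\<in>{1..length I}. Lstar_term m' i I (hmul (hTpow (length I + 1) e) (basis u)) k
                           - Lh (hTpow 2 e) (Lstar_term m' i I (basis u) k))"
    using assms(1) by (simp add: LT1pow_def hshift_hTpow Lstar_tens Lstar_basis Lh_sum sum_subtractf)
  also have "\<dots> \<in> Rel m n"
    using assms(1) \<open>valid_idx m n I\<close> \<open>valid_word u\<close> by (intro Rel_sum Lstar_term_hTpow)
  finally show "Lstar m' i (LT1pow e (basis (I, u))) - Lh (hTpow 2 e) (Lstar m' i (basis (I, u))) \<in> Rel m n" .
qed

lemma qq_nonzero: "qq \<noteq> 0" unfolding qq_def by (simp add: Zero_fract_def eq_fract)

lemma qi_nonzero: "qi m i \<noteq> 0" by (simp add: qi_def qq_nonzero)

lemma psign_diag_qi: "psign m i i * (qi m i - inverse (qi m i)) = qdiff"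
  by (simp add: psign_def qi_def par_def qdiff_def)

lemma psign_square: "psign m i j * psign m i j = 1"
  by (simp add: psign_def power_add[symmetric])

lemma psign_sym: "psign m i j = psign m j i" by (simp add: psign_def mult.commute)

lemma gam_swap: "i \<noteq> j \<Longrightarrow> gam j i = - gam i j" by (simp add: gam_def)

lemma gam_diag: "gam i i = -1" by (simp add: gam_def)

lemma actT_top_pair:
  "actT m (I @ [i, j]) (Suc (length I)) =
    (if i > j then smul (psign m i j) (basis (I @ [j, i]))
     else if i = j then smul ((-1) ^ par m i * qi m i) (basis (I @ [i, j]))
     else smul (psign m i j) (basis (I @ [j, i])) + smul (qq - inverse qq) (basis (I @ [i, j])))"
proof -
  have "(I @ [i, j]) ! length I = i" "(I @ [i, j]) ! Suc (length I) = j"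
    by (simp_all add: nth_append)
  moreover have "(I @ [i, j])[length I := j, Suc (length I) := i] = I @ [j, i]"
    by (simp add: list_update_append)
  ultimately show ?thesis by (simp add: actT_def Let_def)
qed

lemma Le_Le_LT1pow_basis:
  "Le j (Le i (LT1pow (gam i j) (basis (I, u))))
     = basis (I @ [i, j], (length I + 1) # u) - (if i \<le> j then smul qdiff (basis (I @ [i, j], u)) else 0)"
  by (simp add: LT1pow_def hshift_hTpow Le_tens)
     (simp add: gam_def hTpow_def hTinv_qdiff hT_def hmul_simps tens_diff tens_smul)

lemma Le_Le_commutation_basis:
  assumes "valid_idx m n I" "valid_word u" "i \<in> {1..m+n}" "j \<in> {1..m+n}"
  shows "teq m n (Le i (Le j (basis (I, u))))
          (smul (psign m i j * qi m i ^ (if i = j then 1 else 0)) (Le j (Le i (LT1pow (gam i j) (basis (I, u))))))"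
proof -
  define B1 where "B1 = basis (I @ [j, i], u)"
  define B2 where "B2 = basis (I @ [i, j], u)"
  define B3 where "B3 = basis (I @ [i, j], (length I + 1) # u)"
  define G where "G = tensv (actT m (I @ [i, j]) (length I + 1)) u - B3"
  have G: "G \<in> Rel m n"
    using assms unfolding G_def B3_def by (intro Rel_gen relgen_actionI) (auto simp: valid_idx_def)
  have L: "Le i (Le j (basis (I, u))) = B1" by (simp add: B1_def)
  have R: "Le j (Le i (LT1pow (gam i j) (basis (I, u)))) = B3 - (if i \<le> j then smul qdiff B2 else 0)"
    unfolding B2_def B3_def by (rule Le_Le_LT1pow_basis)
  have ps: "psign m i j * psign m i j = 1" by (rule psign_square)
  consider (gt) "i > j" | (eq) "i = j" | (lt) "i < j" by linarith
  then have "B1 - smul (psign m i j * qi m i ^ (if i = j then 1 else 0))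
                 (B3 - (if i \<le> j then smul qdiff B2 else 0))
           = smul (psign m i j * qi m i ^ (if i = j then 1 else 0)) G"
  proof cases
    case gt
    then have "G = smul (psign m i j) B1 - B3"
      by (simp add: G_def actT_top_pair B1_def tensv_smul)
    then show ?thesis using gt ps by (simp add: smul_diff)
  next
    case eq
    have GG: "G = smul ((-1) ^ par m i * qi m i) B2 - B3"
      using eq by (simp add: G_def actT_top_pair B2_def tensv_smul)
    have scalar: "1 + psign m a a * qi m a * qdiff = psign m a a * qi m a * ((-1) ^ par m a * qi m a)" for a
      using qq_nonzero by (simp add: psign_def qi_def par_def qdiff_def field_simps)
    show ?thesis
      unfolding GG using eq by (simp add: B1_def B2_def smul_diff) (metis scalar smul_1 smul_add_left)
  next
    case lt
    then have "G = smul (psign m i j) B1 + smul qdiff B2 - B3"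
      by (simp add: G_def actT_top_pair B1_def B2_def qdiff_def tensv_smul tensv_add)
    then show ?thesis using lt ps by (simp add: smul_diff smul_add)
  qed
  then show ?thesis using G unfolding teq_def L R by (simp add: Rel_smul)
qed

lemma Le_Le_commutation:
  assumes ij: "i \<in> {1..m+n}" "j \<in> {1..m+n}" and x: "validv m n x"
  shows "teq m n (Le i (Le j x))
      (smul (psign m i j * qi m i ^ (if i = j then 1 else 0)) (Le j (Le i (LT1pow (gam i j) x))))"
  unfolding teq_def
  by (rule Rel_lin_diff[OF lin_comp[OF lin_Le lin_Le]
        lin_smul_const[OF lin_comp[OF lin_Le lin_comp[OF lin_Le lin_LT1pow]]] x])
     (rule Le_Le_commutation_basis[OF _ _ ij, unfolded teq_def])

lemma Lh_Lstar_LT1pow: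
  assumes "valid_helt h" "unit_exp e" "validv m n w"
  shows "teq m n (Lh h (Lstar m' i (LT1pow e w))) (Lh (hmul h (hTpow 2 e)) (Lstar m' i w))"
  using teq_Lh[OF assms(1) Lstar_LT1pow[OF assms(2,3)]] by (simp add: Lh_mult)

lemma Lstar_Lstar_Le_braid:
  assumes "a \<in> {1..m+n}" "validv m n y"
    and IH: "teq m n (Lstar m i (Lstar m j y)) (smul c (LT1pow (gam i j) (Lstar m j (Lstar m i y))))"
  shows "teq m n (Le a (LT1pow (- gam i a) (Lstar m i (LT1pow (- gam j a) (Lstar m j y)))))
                 (smul c (LT1pow (gam i j) (Le a (LT1pow (- gam j a) (Lstar m j (LT1pow (- gam i a) (Lstar m i y)))))))"
proof -
  define x where "x = - gam i a"
  define y' where "y' = - gam j a"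
  define z where "z = gam i j"
  define X where "X = Lstar m j (Lstar m i y)"
  define Q where "Q = hmul (hTpow 2 z) (hmul (hTpow 1 y') (hTpow 2 x))"
  have exps: "unit_exp x" "unit_exp y'" "unit_exp z" by (simp_all add: x_def y'_def z_def)
  have valid: "validv m n (Lstar m j y)" "validv m n (Lstar m i y)" "validv m n X"
    using assms(2) by (simp_all add: validv_Lstar X_def)
  have helts: "valid_helt (hTpow 1 x)" "valid_helt (hmul (hTpow 1 x) (hTpow 2 y'))"
    "valid_helt (hmul (hTpow 2 z) (hTpow 1 y'))"
    using exps by (auto intro!: valid_helt_hmul valid_helt_hTpow)
  \<comment> \<open>\<open>gam\<close> is the sign of a strict comparison, so these sign patterns would violate transitivity\<close>
  have not_exceptional: "\<not> (x = 1 \<and> y' = -1 \<and> z = 1)" "\<not> (x = -1 \<and> y' = 1 \<and> z = -1)"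
    by (auto simp: x_def y'_def z_def gam_def split: if_splits)
  have "Le a (LT1pow x (Lstar m i (LT1pow y' (Lstar m j y))))
      = Le a (Lh (hTpow 1 x) (Lstar m i (LT1pow y' (Lstar m j y))))" by (simp add: LT1pow_def)
  also have "teq m n \<dots> (Le a (Lh (hmul (hTpow 1 x) (hTpow 2 y')) (Lstar m i (Lstar m j y))))"
    using exps valid helts by (intro teq_Le[OF assms(1)] Lh_Lstar_LT1pow)
  also have "teq m n \<dots> (Le a (Lh (hmul (hTpow 1 x) (hTpow 2 y')) (smul c (LT1pow z X))))"
    using IH helts by (intro teq_Le[OF assms(1)] teq_Lh) (simp_all add: z_def X_def)
  also have "\<dots> = smul c (Le a (Lh (hmul (hTpow 1 x) (hmul (hTpow 2 y') (hTpow 1 z))) X))"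
    by (simp add: Lh_smul Le_smul LT1pow_def Lh_mult hmul_assoc)
  also have "teq m n \<dots> (smul c (Le a (Lh Q X)))"
    unfolding Q_def using braid_mixed_signs[OF exps not_exceptional] valid(3)
    by (intro teq_smul teq_Le[OF assms(1)] teq_Lh_hecke_ideal)
  finally have lhs: "teq m n (Le a (LT1pow x (Lstar m i (LT1pow y' (Lstar m j y))))) (smul c (Le a (Lh Q X)))" .
  have "LT1pow z (Le a (LT1pow y' (Lstar m j (LT1pow x (Lstar m i y)))))
      = Le a (Lh (hmul (hTpow 2 z) (hTpow 1 y')) (Lstar m j (LT1pow x (Lstar m i y))))"
    using exps by (simp add: LT1pow_def Lh_Le Lh_mult hshift_hTpow numeral_2_eq_2)
  also have "teq m n \<dots> (Le a (Lh Q X))"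
    using Lh_Lstar_LT1pow[OF helts(3) exps(1) valid(2), of m j]
    by (intro teq_Le[OF assms(1)]) (simp add: Q_def X_def hmul_assoc)
  finally have rhs: "teq m n (LT1pow z (Le a (LT1pow y' (Lstar m j (LT1pow x (Lstar m i y)))))) (Le a (Lh Q X))" .
  show ?thesis
    using teq_trans[OF lhs teq_sym[OF teq_smul[OF rhs, of c]]] by (simp add: x_def y'_def z_def)
qed

lemma LT1pow_inverse_eigenvector:
  assumes "validv m n z" "s * s = 1" "s * (q - inverse q) = qdiff" "q \<noteq> 0"
  defines "w \<equiv> smul (inverse q) z + smul s (LT1pow 1 z)"
  shows "teq m n w (smul (s * q) (LT1pow (-1) w))"
proof -
  have "s * qdiff = s * s * (q - inverse q)" using assms(3) by (simp add: mult.assoc)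
  then have "inverse q + qdiff * s = q" using assms(2) by (simp add: algebra_simps)
  then have scalar: "inverse q * X + qdiff * (s * X) = q * X" for X
    by (metis distrib_right mult.assoc mult.commute)
  have "w = smul s (LT1pow (-1) z) + smul q z"
    unfolding w_def LT1pow_minus_one
    by (rule poly_mapping_eqI) (simp add: lookup_add lookup_minus algebra_simps, rule scalar)
  also have "teq m n \<dots> (smul s (LT1pow (-1) z) + smul q (LT1pow (-1) (LT1pow 1 z)))"
    using teq_sym[OF LT1pow_inverse[of "-1" m n z]] assms(1)
    by (intro teq_add teq_refl teq_smul) (simp_all add: unit_exp_def)
  also have "\<dots> = smul (s * q * inverse q) (LT1pow (-1) z) + smul (s * q * s) (LT1pow (-1) (LT1pow 1 z))"
    using assms(2,4) by (simp add: mult.assoc mult.left_commute[of s q])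
  also have "\<dots> = smul (s * q) (LT1pow (-1) w)"
    by (simp add: w_def LT1pow_add LT1pow_smul smul_add)
  finally show ?thesis .
qed

lemma Lstar_Lstar_Le_diagonal:
  assumes "validv m n y"
  shows "teq m n
    ((if a = j then smul (if i = j then inverse (qi m j) else 1) (Kinv m j (Lstar m i y)) else 0)
      + smul (psign m j a) (if a = i then Kinv m i (LT1pow (- gam j a) (Lstar m j y)) else 0))
    (smul (psign m i j * qi m i ^ (if i = j then 1 else 0)) (LT1pow (gam i j)
      ((if a = i then smul (if j = i then inverse (qi m i) else 1) (Kinv m i (Lstar m j y)) else 0)
      + smul (psign m i a) (if a = j then Kinv m j (LT1pow (- gam i a) (Lstar m i y)) else 0))))"
proof -
  consider "a \<noteq> i" "a \<noteq> j" | "a = j" "a \<noteq> i" | "a = i" "a \<noteq> j" | "a = i" "a = j" by blast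
  then show ?thesis
  proof cases
    case 1
    then show ?thesis by (simp add: teq_refl)
  next
    case 2
    have "teq m n (Kinv m j (Lstar m i y)) (LT1pow (gam i j) (LT1pow (- gam i j) (Kinv m j (Lstar m i y))))"
      by (rule teq_sym[OF LT1pow_inverse[OF unit_exp_gam(1)]]) (intro validv_Kinv validv_Lstar assms)
    then show ?thesis using 2 psign_square[of m i j]
      by (simp add: LT1pow_smul Kinv_LT1pow)
  next
    case 3
    then show ?thesis using gam_swap[of i j] psign_sym[of m i j]
      by (simp add: LT1pow_smul Kinv_LT1pow teq_refl)
  next
    case 4
    have "teq m n (smul (inverse (qi m i)) (Kinv m i (Lstar m i y)) + smul (psign m i i) (LT1pow 1 (Kinv m i (Lstar m i y))))
      (smul (psign m i i * qi m i) (LT1pow (-1)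
        (smul (inverse (qi m i)) (Kinv m i (Lstar m i y)) + smul (psign m i i) (LT1pow 1 (Kinv m i (Lstar m i y))))))"
      using assms by (intro LT1pow_inverse_eigenvector psign_square psign_diag_qi qi_nonzero validv_Kinv validv_Lstar)
    then show ?thesis
      using 4 by (simp add: gam_diag Kinv_LT1pow)
  qed
qed

lemma Lstar_Lstar_commutation_basis:
  "valid_idx m n I \<Longrightarrow> valid_word u \<Longrightarrow>
    teq m n (Lstar m i (Lstar m j (basis (I, u))))
      (smul (psign m i j * qi m i ^ (if i = j then 1 else 0)) (LT1pow (gam i j) (Lstar m j (Lstar m i (basis (I, u))))))"
proof (induction I rule: rev_induct)
  case Nil
  then show ?case by (simp add: Lstar_Nil teq_refl)
next
  case (snoc a I)
  define c where "c = psign m i j * qi m i ^ (if i = j then 1 else 0)"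
  define y where "y = basis (I, u)"
  have a: "a \<in> {1..m+n}" and y: "validv m n y" using snoc.prems by (auto simp: y_def)
  have IH: "teq m n (Lstar m i (Lstar m j y)) (smul c (LT1pow (gam i j) (Lstar m j (Lstar m i y))))"
    using snoc by (simp add: y_def c_def)
  define KL where "KL = (if a = j then smul (if i = j then inverse (qi m j) else 1) (Kinv m j (Lstar m i y)) else 0)
      + smul (psign m j a) (if a = i then Kinv m i (LT1pow (- gam j a) (Lstar m j y)) else 0)"
  define KR where "KR = (if a = i then smul (if j = i then inverse (qi m i) else 1) (Kinv m i (Lstar m j y)) else 0)
      + smul (psign m i a) (if a = j then Kinv m j (LT1pow (- gam i a) (Lstar m i y)) else 0)"
  have lhs: "Lstar m i (Lstar m j (Le a y)) = KL + smul (psign m j a * psign m i a)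
      (Le a (LT1pow (- gam i a) (Lstar m i (LT1pow (- gam j a) (Lstar m j y)))))"
    unfolding KL_def
    by (cases "a = j"; cases "a = i")
       (simp_all add: Lstar_Le_commutation Lstar_add Lstar_smul Lstar_Kinv smul_add add.assoc)
  have rhs: "smul c (LT1pow (gam i j) (Lstar m j (Lstar m i (Le a y)))) = smul c (LT1pow (gam i j) KR)
      + smul (psign m j a * psign m i a)
          (smul c (LT1pow (gam i j) (Le a (LT1pow (- gam j a) (Lstar m j (LT1pow (- gam i a) (Lstar m i y)))))))"
    unfolding KR_def
    by (cases "a = j"; cases "a = i")
       (simp_all add: Lstar_Le_commutation Lstar_add Lstar_smul Lstar_Kinv LT1pow_add LT1pow_smul
         smul_add add.assoc mult.commute)
  have "teq m n (Lstar m i (Lstar m j (Le a y))) (smul c (LT1pow (gam i j) (Lstar m j (Lstar m i (Le a y)))))"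
    unfolding lhs rhs unfolding KL_def KR_def c_def
    by (intro teq_add Lstar_Lstar_Le_diagonal[OF y] teq_smul Lstar_Lstar_Le_braid[OF a y IH[unfolded c_def]])
  then show ?case by (simp add: y_def c_def)
qed

lemma Lstar_Lstar_commutation:
  assumes "validv m n x"
  shows "teq m n (Lstar m i (Lstar m j x))
      (smul (psign m i j * qi m i ^ (if i = j then 1 else 0)) (LT1pow (gam i j) (Lstar m j (Lstar m i x))))"
  unfolding teq_def
  by (rule Rel_lin_diff[OF lin_comp[OF lin_Lstar lin_Lstar]
        lin_smul_const[OF lin_comp[OF lin_LT1pow lin_comp[OF lin_Lstar lin_Lstar]]] assms])
     (rule Lstar_Lstar_commutation_basis[unfolded teq_def])

theorem proposition6p3:
  fixes m n i j :: nat
  assumes "1 \<le> m" and "1 \<le> n"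
    and "i \<in> {1..m+n}" and "j \<in> {1..m+n}"
  shows "\<forall>x. validv m n x \<longrightarrow>
           (teq m n (Le i (Le j x))
              (smul (psign m i j * qi m i ^ (if i = j then 1 else 0))
                    (Le j (Le i (LT1pow (gam i j) x))))
          \<and> teq m n (Lstar m i (Lstar m j x))
              (smul (psign m i j * qi m i ^ (if i = j then 1 else 0))
                    (LT1pow (gam i j) (Lstar m j (Lstar m i x))))
          \<and> teq m n (Lstar m i (Le j x))
              ((if i = j then Kinv m i x else 0)
               + smul (psign m i j) (Le j (LT1pow (- gam i j) (Lstar m i x)))))"
  using Le_Le_commutation[OF assms(3,4)] Lstar_Lstar_commutation
  by (simp add: Lstar_Le_commutation eq_commute[of j i] teq_refl)

end
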